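(* Assume the Smoothness Assumption (see context), and let $\{x^k_\tau,y^k_\tau,z^k_\tau\}$ be generated by Algorithm 1 with $T=M$, with output $(\tilde x,\tilde y)$. Then $$\begin{aligned}&\mathbb E\big[\mathrm{dist}(0,\nabla_xF(\tilde x,\tilde y)+\mathcal N_{\mathcal X}(\tilde x))^2\big]+\mathbb E\big[\mathrm{dist}(0,-\nabla_yF(\tilde x,\tilde y)+\mathcal N_{\mathcal Y}(\tilde y))^2\big]\\ \le{}&\frac1{KT}\Big(\frac4{\alpha_x^2}+16L_x^2+8r^2+6L_y^2\Big)\sum_{k=0}^{K-1}\sum_{\tau=0}^{T-1}\mathbb E\|x^k_{\tau+1}-x^k_\tau\|^2+\frac1{KT}\Big(\frac3{\alpha_y^2}+22L_y^2\Big)\sum_{k=0}^{K-1}\sum_{\tau=0}^{T-1}\mathbb E\|y^k_{\tau+1}-y^k_\tau\|^2\\ &+\frac{8r^2}{KT}\sum_{k=0}^{K-1}\sum_{\tau=0}^{T-1}\mathbb E\|x^k_{\tau+1}-z^k_\tau\|^2+(4C_{\sigma,x}+3C_{\sigma,y}),\end{aligned}$$ where $C_{\sigma,x}=C_{\sigma,y}=0$ in the finite-sum setting and $C_{\sigma,x}=\sigma_x^2/B$, $C_{\sigma,y}=\sigma_y^2/B$ in the online setting.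
   Context: Problem. Let $\mathcal X\subseteq\mathbb R^{d_x}$, $\mathcal Y\subseteq\mathbb R^{d_y}$ be nonempty closed convex sets, $\mathbb P$ a distribution on $\Xi$, $f:\mathbb R^{d_x}\times\mathbb R^{d_y}\times\Xi\to\mathbb R$, $F(x,y)=\mathbb E_{\xi\sim\mathbb P}[f(x,y;\xi)]$ (finite-sum setting: empirical distribution of $N$ samples; online setting: i.i.d. sampling). $\mathcal N_S$ denotes the normal cone and $\mathrm{dist}$ the Euclidean distance. Smoothness Assumption: (i) $\mathcal Y$ compact with diameter $D_{\mathcal Y}$; (ii) $\mathbb E|f(x_1,y_1;\xi)-f(x_2,y_2;\xi)|\le\ell(\|x_1-x_2\|+\|y_1-y_2\|)$ on $\mathcal X\times\mathcal Y$; (iii) for all $x,x_i\in\mathcal X$, $y,y_i\in\mathcal Y$: $\mathbb E\|\nabla_xf(x_1,y;\xi)-\nabla_xf(x_2,y;\xi)\|^2\le L_x^2\|x_1-x_2\|^2$, $\mathbb E\|\nabla_xf(x,y_1;\xi)-\nabla_xf(x,y_2;\xi)\|^2\le L_y^2\|y_1-y_2\|^2$, $\mathbb E\|\nabla_yf(x_1,y_1;\xi)-\nabla_yf(x_2,y_2;\xi)\|^2\le L_y^2(\|x_1-x_2\|^2+\|y_1-y_2\|^2)$; (iv) $F(\cdot,y)+\frac\rho2\|\cdot\|^2$ convex on $\mathcal X$ for each $y$; (v) $\mathbb E[\nabla f(x,y;\xi)\mid(x,y)]=\nabla F(x,y)$, $\mathbb E\|\nabla_xf-\nabla_xF\|^2\le\sigma_x^2$,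 $\mathbb E\|\nabla_yf-\nabla_yF\|^2\le\sigma_y^2$; (vi) $\max_y\min_xF\ge\underline F$. Algorithm 1: Input $(x^0_0,y^0_0,z^0_0)$, positive integers $K,T,M,B$, parameters $\alpha_x,\alpha_y,\beta,r>0$. For $k=0,\dots,K-1$, $\tau=0,\dots,T-1$: if $\tau=0$, $G^k_{x,0}=\frac1B\sum_{i=1}^B\nabla_xf(x^k_0,y^k_0;\xi^k_{0,i})$, $G^k_{y,0}$ analogously, with $B$ i.i.d. samples (online) or all $N$ samples, $B=N$ (finite-sum); if $\tau\ge1$, with $M$ fresh i.i.d. samples, $G^k_{x,\tau}=\frac1M\sum_{i=1}^M[\nabla_xf(x^k_\tau,y^k_\tau;\xi^k_{\tau,i})-\nabla_xf(x^k_{\tau-1},y^k_{\tau-1};\xi^k_{\tau,i})]+G^k_{x,\tau-1}$, $G^k_{y,\tau}$ analogously. Update $x^k_{\tau+1}=\mathrm{proj}_{\mathcal X}(x^k_\tau-\alpha_x[G^k_{x,\tau}+r(x^k_\tau-z^k_\tau)])$, $y^k_{\tau+1}=\mathrm{proj}_{\mathcal Y}(y^k_\tau+\alpha_yG^k_{y,\tau})$, $z^k_{\tau+1}=z^k_\tau+\beta(x^k_{\tau+1}-z^k_\tau)$; $(x^{k+1}_0,y^{k+1}_0,z^{k+1}_0)=(x^k_T,y^k_T,z^k_T)$. Output $(\tilde x,\tilde y)$ sampled uniformly at random from $\{(x^k_{\tau+1},y^k_{\tau+1}):0\le k\le K-1,0\le\tau\le T-1\}$. *)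

theory Defs
  imports "HOL-Probability.Probability"
begin

definition normal_cone :: "'a::real_inner set \<Rightarrow> 'a \<Rightarrow> 'a set" where
  "normal_cone S x = (if x \<in> S then {v. \<forall>w\<in>S. inner v (w - x) \<le> 0} else {})"

text \<open>Algorithm 1, indexed by the global step counter t = k*T + tau.
  The state at step t is (x_t, y_t, z_t, Gx_t, Gy_t), where Gx_t, Gy_t are the
  gradient estimators computed at (x_t, y_t).  The function init k x y gives the
  estimator used at the start (tau = 0) of outer iteration k, and xi k tau i is the
  i-th sample drawn at inner step tau of outer iteration k.\<close>
primrec alg ::
  "'a::euclidean_space set \<Rightarrow> 'b::euclidean_space set \<Rightarrow> real \<Rightarrow> real \<Rightarrow> real \<Rightarrow> real
   \<Rightarrow> nat \<Rightarrow> nat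
   \<Rightarrow> ('a \<Rightarrow> 'b \<Rightarrow> 'c \<Rightarrow> 'a) \<Rightarrow> ('a \<Rightarrow> 'b \<Rightarrow> 'c \<Rightarrow> 'b)
   \<Rightarrow> (nat \<Rightarrow> 'a \<Rightarrow> 'b \<Rightarrow> 'a \<times> 'b) \<Rightarrow> (nat \<Rightarrow> nat \<Rightarrow> nat \<Rightarrow> 'c)
   \<Rightarrow> 'a \<Rightarrow> 'b \<Rightarrow> 'a \<Rightarrow> nat \<Rightarrow> 'a \<times> 'b \<times> 'a \<times> 'a \<times> 'b" where
  "alg X Y ax ay b r T M gx gy init xi x0 y0 z0 0 =
     (x0, y0, z0, fst (init 0 x0 y0), snd (init 0 x0 y0))"
| "alg X Y ax ay b r T M gx gy init xi x0 y0 z0 (Suc t) =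
     (case alg X Y ax ay b r T M gx gy init xi x0 y0 z0 t of (x, y, z, Gx, Gy) \<Rightarrow>
       (let x' = closest_point X (x - ax *\<^sub>R (Gx + r *\<^sub>R (x - z)));
            y' = closest_point Y (y + ay *\<^sub>R Gy);
            z' = z + b *\<^sub>R (x' - z);
            k = Suc t div T;
            tau = Suc t mod T
        in if tau = 0 then (x', y', z', fst (init k x' y'), snd (init k x' y'))
           else (x', y', z',
                 (1 / real M) *\<^sub>R (\<Sum>i<M. gx x' y' (xi k tau i) - gx x y (xi k tau i)) + Gx,
                 (1 / real M) *\<^sub>R (\<Sum>i<M. gy x' y' (xi k tau i) - gy x y (xi k tau i)) + Gy)))"

definition alg_x where "alg_x X Y ax ay b r T M gx gy init xi x0 y0 z0 t =
  fst (alg X Y ax ay b r T M gx gy init xi x0 y0 z0 t)"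
definition alg_y where "alg_y X Y ax ay b r T M gx gy init xi x0 y0 z0 t =
  fst (snd (alg X Y ax ay b r T M gx gy init xi x0 y0 z0 t))"
definition alg_z where "alg_z X Y ax ay b r T M gx gy init xi x0 y0 z0 t =
  fst (snd (snd (alg X Y ax ay b r T M gx gy init xi x0 y0 z0 t)))"

end

theory Submission
  imports Defs
begin

(* Every update is a projected step, so the rescaled projection residual lies in the normal cone
   at the new iterate.  Hence the stationarity measure after step t is bounded by the step lengths,
   the change of the true gradient (mean-square Lipschitz continuity) and the error e_t of the
   gradient estimator at step t.  Inside an epoch e_(t+1) = e_t plus the average of M fresh centred
   increments; the fresh samples are independent of everything computed before, so second moments
   add: E|e_(t+1)|^2 <= E|e_t|^2 + (1/M) (a E|x_(t+1) - x_t|^2 + b E|y_(t+1) - y_t|^2).  At the start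
   of an epoch e is the average of B fresh centred samples (online) or zero (full batch).  Summing
   over an epoch of length T = M and then over the epochs yields the bound. *)

lemma power2_norm_sum_le:
  fixes v :: "'i \<Rightarrow> 'v::real_normed_vector"
  shows "(norm (\<Sum>i\<in>I. v i))\<^sup>2 \<le> real (card I) * (\<Sum>i\<in>I. (norm (v i))\<^sup>2)"
proof -
  have "(norm (\<Sum>i\<in>I. v i))\<^sup>2 \<le> (\<Sum>i\<in>I. norm (v i))\<^sup>2"
    by (intro power_mono norm_sum) simp
  also have "\<dots> \<le> (\<Sum>i\<in>I. (norm (v i))\<^sup>2) * card I"
    by (rule sum_squared_le_sum_of_squares)
  finally show ?thesis
    by (simp add: mult.commute)
qed

lemma power2_norm_add_le:
  fixes a b :: "'v::real_normed_vector"
  shows "(norm (a + b))\<^sup>2 \<le> 2 * ((norm a)\<^sup>2 + (norm b)\<^sup>2)"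
  using power2_norm_sum_le[of "\<lambda>i. [a, b] ! i" "{..<2}"] by (simp add: eval_nat_numeral)

lemma power2_norm_add3_le:
  fixes a b c :: "'v::real_normed_vector"
  shows "(norm (a + b + c))\<^sup>2 \<le> 3 * ((norm a)\<^sup>2 + (norm b)\<^sup>2 + (norm c)\<^sup>2)"
  using power2_norm_sum_le[of "\<lambda>i. [a, b, c] ! i" "{..<3}"] by (simp add: eval_nat_numeral add.assoc)

lemma power2_norm_add4_le:
  fixes a b c d :: "'v::real_normed_vector"
  shows "(norm (a + b + c + d))\<^sup>2 \<le> 4 * ((norm a)\<^sup>2 + (norm b)\<^sup>2 + (norm c)\<^sup>2 + (norm d)\<^sup>2)"
  using power2_norm_sum_le[of "\<lambda>i. [a, b, c, d] ! i" "{..<4}"] by (simp add: eval_nat_numeral add.assoc)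

lemma scaleR_mean_centered_increments:
  fixes f f' :: "nat \<Rightarrow> 'v::real_vector"
  assumes "0 < n"
  shows "(G - F) + (1 / real n) *\<^sub>R (\<Sum>i<n. (f' i - F') - (f i - F))
       = ((1 / real n) *\<^sub>R (\<Sum>i<n. f' i - f i) + G) - F'"
proof -
  have "(\<Sum>i<n. (f' i - F') - (f i - F)) = (\<Sum>i<n. (f' i - f i) - (F' - F))"
    by (intro sum.cong) (auto simp: algebra_simps)
  also have "\<dots> = (\<Sum>i<n. f' i - f i) - real n *\<^sub>R (F' - F)"
    by (simp add: sum_subtractf sum_constant_scaleR scaleR_diff_right)
  finally have sum: "(\<Sum>i<n. (f' i - F') - (f i - F)) = (\<Sum>i<n. f' i - f i) - real n *\<^sub>R (F' - F)" .
  have cancel: "(1 / real n) *\<^sub>R (real n *\<^sub>R (F' - F)) = F' - F"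
    using assms by simp
  show ?thesis
    unfolding sum scaleR_diff_right cancel using assms by (simp add: algebra_simps)
qed

section \<open>Projections onto closed convex sets\<close>

lemma closest_point_residual_in_normal_cone:
  fixes X :: "'a::euclidean_space set"
  assumes "convex X" "closed X" "X \<noteq> {}" and "0 < c"
  shows "(1 / c) *\<^sub>R (p - closest_point X p) \<in> normal_cone X (closest_point X p)"
proof -
  have "inner ((1 / c) *\<^sub>R (p - closest_point X p)) (w - closest_point X p) \<le> 0" if "w \<in> X" for w
    using closest_point_dot[OF assms(1,2) that, of p] \<open>0 < c\<close> by (simp add: divide_nonpos_pos)
  then show ?thesis
    using closest_point_in_set[OF assms(2,3)] unfolding normal_cone_def by auto
qed

lemma infdist_normal_cone_closest_point_le:
  fixes X :: "'a::euclidean_space set"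
  assumes "convex X" "closed X" "X \<noteq> {}" and "0 < c" and "x' = closest_point X p"
  shows "(infdist 0 ((\<lambda>v. w + v) ` normal_cone X x'))\<^sup>2 \<le> (norm (w + (1 / c) *\<^sub>R (p - x')))\<^sup>2"
proof -
  have "infdist 0 ((\<lambda>v. w + v) ` normal_cone X x') \<le> dist 0 (w + (1 / c) *\<^sub>R (p - x'))"
    using closest_point_residual_in_normal_cone[OF assms(1-4)] assms(5) by (intro infdist_le) auto
  then show ?thesis
    by (intro power_mono) (auto simp: infdist_nonneg)
qed

lemma projected_descent_step_stationarity:
  fixes X :: "'a::euclidean_space set"
  assumes "convex X" "closed X" "X \<noteq> {}" and "0 < a"
    and "x' = closest_point X (x - a *\<^sub>R (G + r *\<^sub>R (x - z)))"
  shows "(infdist 0 ((\<lambda>v. F' + v) ` normal_cone X x'))\<^sup>2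
     \<le> 4 * (norm (F' - F))\<^sup>2 + 4 * (norm (G - F))\<^sup>2 + (4 / a\<^sup>2 + 8 * r\<^sup>2) * (norm (x' - x))\<^sup>2
        + 8 * r\<^sup>2 * (norm (x' - z))\<^sup>2"
proof -
  have "(infdist 0 ((\<lambda>v. F' + v) ` normal_cone X x'))\<^sup>2
      \<le> (norm (F' + (1 / a) *\<^sub>R ((x - a *\<^sub>R (G + r *\<^sub>R (x - z))) - x')))\<^sup>2"
    by (rule infdist_normal_cone_closest_point_le[OF assms])
  also have "F' + (1 / a) *\<^sub>R ((x - a *\<^sub>R (G + r *\<^sub>R (x - z))) - x')
      = (F' - F) + (F - G) + (1 / a) *\<^sub>R (x - x') + (- r) *\<^sub>R (x - z)"
    using \<open>0 < a\<close> by (simp add: algebra_simps)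
  also have "(norm \<dots>)\<^sup>2 \<le> 4 * ((norm (F' - F))\<^sup>2 + (norm (F - G))\<^sup>2
      + (norm ((1 / a) *\<^sub>R (x - x')))\<^sup>2 + (norm ((- r) *\<^sub>R (x - z)))\<^sup>2)"
    by (rule power2_norm_add4_le)
  also have "(norm ((1 / a) *\<^sub>R (x - x')))\<^sup>2 = (1 / a\<^sup>2) * (norm (x' - x))\<^sup>2"
    using \<open>0 < a\<close> by (simp add: power_mult_distrib norm_minus_commute power_divide)
  also have "(norm ((- r) *\<^sub>R (x - z)))\<^sup>2 = r\<^sup>2 * (norm ((x - x') + (x' - z)))\<^sup>2"
    by (simp add: power_mult_distrib)
  also have "\<dots> \<le> r\<^sup>2 * (2 * ((norm (x' - x))\<^sup>2 + (norm (x' - z))\<^sup>2))"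
    using power2_norm_add_le[of "x - x'" "x' - z"] by (intro mult_left_mono) (auto simp: norm_minus_commute)
  also have "norm (F - G) = norm (G - F)"
    by (rule norm_minus_commute)
  finally show ?thesis
    using \<open>0 < a\<close> by (simp add: algebra_simps)
qed

lemma projected_ascent_step_stationarity:
  fixes Y :: "'b::euclidean_space set"
  assumes "convex Y" "closed Y" "Y \<noteq> {}" and "0 < a"
    and "y' = closest_point Y (y + a *\<^sub>R G)"
  shows "(infdist 0 ((\<lambda>v. - F' + v) ` normal_cone Y y'))\<^sup>2
     \<le> 3 * (norm (F' - F))\<^sup>2 + 3 * (norm (G - F))\<^sup>2 + (3 / a\<^sup>2) * (norm (y' - y))\<^sup>2"
proof -
  have "(infdist 0 ((\<lambda>v. - F' + v) ` normal_cone Y y'))\<^sup>2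
      \<le> (norm (- F' + (1 / a) *\<^sub>R ((y + a *\<^sub>R G) - y')))\<^sup>2"
    by (rule infdist_normal_cone_closest_point_le[OF assms])
  also have "- F' + (1 / a) *\<^sub>R ((y + a *\<^sub>R G) - y') = (F - F') + (G - F) + (1 / a) *\<^sub>R (y - y')"
    using \<open>0 < a\<close> by (simp add: algebra_simps)
  also have "(norm \<dots>)\<^sup>2 \<le> 3 * ((norm (F - F'))\<^sup>2 + (norm (G - F))\<^sup>2 + (norm ((1 / a) *\<^sub>R (y - y')))\<^sup>2)"
    by (rule power2_norm_add3_le)
  also have "(norm ((1 / a) *\<^sub>R (y - y')))\<^sup>2 = (1 / a\<^sup>2) * (norm (y' - y))\<^sup>2"
    using \<open>0 < a\<close> by (simp add: power_mult_distrib norm_minus_commute power_divide)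
  also have "norm (F - F') = norm (F' - F)"
    by (rule norm_minus_commute)
  finally show ?thesis
    using \<open>0 < a\<close> by (simp add: algebra_simps)
qed

lemma measurable_compose_jointly:
  assumes "(\<lambda>(x, y, s). g x y s) \<in> borel_measurable (borel \<Otimes>\<^sub>M (borel \<Otimes>\<^sub>M P))"
    and "f \<in> borel_measurable N" "h \<in> borel_measurable N" "k \<in> measurable N P"
  shows "(\<lambda>u. g (f u) (h u) (k u)) \<in> borel_measurable N"
  using measurable_compose[OF measurable_Pair[OF assms(2) measurable_Pair[OF assms(3,4)]] assms(1)] by simp

lemma measurable_integral_compose_jointly:
  fixes g :: "'x::topological_space \<Rightarrow> 'y::topological_space \<Rightarrow> 'c \<Rightarrow> 'v::euclidean_space"
  assumes "prob_space P" "(\<lambda>(x, y, s). g x y s) \<in> borel_measurable (borel \<Otimes>\<^sub>M (borel \<Otimes>\<^sub>M P))"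
    and "f \<in> borel_measurable N" "h \<in> borel_measurable N"
  shows "(\<lambda>u. \<integral>s. g (f u) (h u) s \<partial>P) \<in> borel_measurable N"
proof -
  interpret prob_space P by fact
  have "(\<lambda>p. g (f (fst p)) (h (fst p)) (snd p)) \<in> borel_measurable (N \<Otimes>\<^sub>M P)"
    using assms(3,4) by (intro measurable_compose_jointly[OF assms(2)]) auto
  then show ?thesis
    by (intro borel_measurable_lebesgue_integral[where f="\<lambda>u s. g (f u) (h u) s"]) (simp add: case_prod_beta')
qed

definition square_integrable :: "'w measure \<Rightarrow> ('w \<Rightarrow> 'v::real_normed_vector) \<Rightarrow> bool" where
  "square_integrable M f \<longleftrightarrow> f \<in> borel_measurable M \<and> integrable M (\<lambda>\<omega>. (norm (f \<omega>))\<^sup>2)"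

lemma square_integrable_bound:
  assumes "g \<in> borel_measurable M" "integrable M h" "\<And>\<omega>. \<omega> \<in> space M \<Longrightarrow> (norm (g \<omega>))\<^sup>2 \<le> h \<omega>"
  shows "square_integrable M g"
  unfolding square_integrable_def
proof
  show "integrable M (\<lambda>\<omega>. (norm (g \<omega>))\<^sup>2)"
  proof (rule Bochner_Integration.integrable_bound[OF assms(2)])
    show "(\<lambda>\<omega>. (norm (g \<omega>))\<^sup>2) \<in> borel_measurable M"
      using assms(1) by measurable
    show "AE \<omega> in M. norm ((norm (g \<omega>))\<^sup>2) \<le> norm (h \<omega>)"
    proof (rule AE_I2)
      fix \<omega> assume "\<omega> \<in> space M"
      then have "(norm (g \<omega>))\<^sup>2 \<le> h \<omega>"
        by (rule assms(3))
      then show "norm ((norm (g \<omega>))\<^sup>2) \<le> norm (h \<omega>)"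
        by simp
    qed
  qed
qed (fact assms)

lemma square_integrable_add:
  fixes f g :: "'w \<Rightarrow> 'v::euclidean_space"
  assumes "square_integrable M f" "square_integrable M g"
  shows "square_integrable M (\<lambda>\<omega>. f \<omega> + g \<omega>)"
proof (rule square_integrable_bound)
  show "(\<lambda>\<omega>. f \<omega> + g \<omega>) \<in> borel_measurable M"
    using assms unfolding square_integrable_def by auto
  show "integrable M (\<lambda>\<omega>. 2 * ((norm (f \<omega>))\<^sup>2 + (norm (g \<omega>))\<^sup>2))"
    using assms unfolding square_integrable_def by auto
qed (rule power2_norm_add_le)

lemma square_integrable_scaleR:
  fixes f :: "'w \<Rightarrow> 'v::euclidean_space"
  assumes "square_integrable M f"
  shows "square_integrable M (\<lambda>\<omega>. c *\<^sub>R f \<omega>)"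
  using assms unfolding square_integrable_def by (auto simp: power_mult_distrib)

lemma square_integrable_diff:
  fixes f g :: "'w \<Rightarrow> 'v::euclidean_space"
  assumes "square_integrable M f" "square_integrable M g"
  shows "square_integrable M (\<lambda>\<omega>. f \<omega> - g \<omega>)"
  using square_integrable_add[OF assms(1) square_integrable_scaleR[OF assms(2), of "-1"]] by simp

lemma square_integrable_const:
  fixes c :: "'v::euclidean_space"
  assumes "finite_measure M"
  shows "square_integrable M (\<lambda>_. c)"
  using finite_measure.integrable_const[OF assms] unfolding square_integrable_def by auto

lemma integrable_if_square_integrable:
  fixes f :: "'w \<Rightarrow> 'v::euclidean_space"
  assumes "finite_measure M" "square_integrable M f"
  shows "integrable M f"
proof -
  interpret finite_measure M by fact
  have f: "f \<in> borel_measurable M" and sq: "integrable M (\<lambda>s. (norm (f s))\<^sup>2)"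
    using assms(2) unfolding square_integrable_def by auto
  have "(\<lambda>s. norm (f s)) \<in> borel_measurable M"
    using f by measurable
  then have "integrable M (\<lambda>s. norm (f s))"
    using sq by (rule square_integrable_imp_integrable)
  then show ?thesis
    using integrable_norm_iff[OF f] by simp
qed

lemma integral_norm_centered_square:
  fixes h :: "'c \<Rightarrow> 'v::euclidean_space"
  assumes "prob_space P" "integrable P h" "integrable P (\<lambda>s. (norm (h s))\<^sup>2)"
  shows "integrable P (\<lambda>s. (norm (h s - (\<integral>s. h s \<partial>P)))\<^sup>2)"
    and "(\<integral>s. (norm (h s - (\<integral>s. h s \<partial>P)))\<^sup>2 \<partial>P)
         = (\<integral>s. (norm (h s))\<^sup>2 \<partial>P) - (norm (\<integral>s. h s \<partial>P))\<^sup>2"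
proof -
  interpret prob_space P by fact
  define m where "m = (\<integral>s. h s \<partial>P)"
  have eq: "(norm (h s - m))\<^sup>2 = (norm (h s))\<^sup>2 - 2 * inner (h s) m + (norm m)\<^sup>2" for s
    by (simp only: power2_norm_eq_inner) (simp add: inner_diff_left inner_diff_right inner_commute)
  have inner_int: "integrable P (\<lambda>s. inner (h s) m)"
    using assms(2) by auto
  show "integrable P (\<lambda>s. (norm (h s - (\<integral>s. h s \<partial>P)))\<^sup>2)"
    unfolding m_def[symmetric] eq using inner_int assms(3) by auto
  have "(\<integral>s. (norm (h s - m))\<^sup>2 \<partial>P)
      = (\<integral>s. (norm (h s))\<^sup>2 \<partial>P) - 2 * (\<integral>s. inner (h s) m \<partial>P) + (norm m)\<^sup>2"
    unfolding eq using inner_int assms(3) by (simp add: prob_space)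
  also have "(\<integral>s. inner (h s) m \<partial>P) = inner m m"
    using assms(2) by (simp add: m_def)
  finally show "(\<integral>s. (norm (h s - (\<integral>s. h s \<partial>P)))\<^sup>2 \<partial>P)
      = (\<integral>s. (norm (h s))\<^sup>2 \<partial>P) - (norm (\<integral>s. h s \<partial>P))\<^sup>2"
    by (simp add: m_def power2_norm_eq_inner)
qed

lemma power2_norm_integral_le:
  fixes h :: "'c \<Rightarrow> 'v::euclidean_space"
  assumes "prob_space P" "integrable P h" "integrable P (\<lambda>s. (norm (h s))\<^sup>2)"
  shows "(norm (\<integral>s. h s \<partial>P))\<^sup>2 \<le> (\<integral>s. (norm (h s))\<^sup>2 \<partial>P)"
  using integral_norm_centered_square[OF assms] integral_nonneg_AE[of "\<lambda>s. (norm (h s - (\<integral>s. h s \<partial>P)))\<^sup>2" P]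
  by simp

lemma integral_norm_centered_square_le:
  fixes h :: "'c \<Rightarrow> 'v::euclidean_space"
  assumes "prob_space P" "integrable P h" "integrable P (\<lambda>s. (norm (h s))\<^sup>2)"
  shows "(\<integral>s. (norm (h s - (\<integral>s. h s \<partial>P)))\<^sup>2 \<partial>P) \<le> (\<integral>s. (norm (h s))\<^sup>2 \<partial>P)"
  using integral_norm_centered_square(2)[OF assms] by simp

lemma nn_integral_ennreal_add:
  fixes f g :: "'a \<Rightarrow> real"
  assumes "f \<in> borel_measurable M" "g \<in> borel_measurable M"
    and "\<And>x. x \<in> space M \<Longrightarrow> 0 \<le> f x" "\<And>x. x \<in> space M \<Longrightarrow> 0 \<le> g x"
  shows "(\<integral>\<^sup>+x. ennreal (f x + g x) \<partial>M) = (\<integral>\<^sup>+x. ennreal (f x) \<partial>M) + (\<integral>\<^sup>+x. ennreal (g x) \<partial>M)"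
  using assms
  by (subst nn_integral_add[symmetric])
    (auto intro!: nn_integral_cong simp: ennreal_plus[symmetric] simp del: ennreal_plus)

lemma integral_le_if_nn_integral_le:
  fixes f :: "'w \<Rightarrow> real"
  assumes "f \<in> borel_measurable Q" "\<And>\<omega>. 0 \<le> f \<omega>" "(\<integral>\<^sup>+\<omega>. ennreal (f \<omega>) \<partial>Q) \<le> ennreal c" "0 \<le> c"
  shows "integrable Q f" "(\<integral>\<omega>. f \<omega> \<partial>Q) \<le> c"
proof -
  have "(\<integral>\<^sup>+\<omega>. ennreal (f \<omega>) \<partial>Q) < \<infinity>"
    using assms(3) by (simp add: le_less_trans)
  then show int: "integrable Q f"
    using assms by (intro integrableI_nonneg) auto
  have "ennreal (\<integral>\<omega>. f \<omega> \<partial>Q) \<le> ennreal c"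
    using nn_integral_eq_integral[OF int] assms(2,3) by simp
  then show "(\<integral>\<omega>. f \<omega> \<partial>Q) \<le> c"
    using assms(4) by (simp add: ennreal_le_iff)
qed

lemma integral_map_pmf_of_set_lessThan:
  fixes f :: "'c \<Rightarrow> 'v::euclidean_space"
  assumes "0 < N"
  shows "(\<integral>s. f s \<partial>measure_pmf (map_pmf d (pmf_of_set {..<N}))) = (1 / real N) *\<^sub>R (\<Sum>j<N. f (d j))"
proof -
  have "(\<integral>s. f s \<partial>measure_pmf (map_pmf d (pmf_of_set {..<N})))
      = (\<integral>j. f (d j) \<partial>measure_pmf (pmf_of_set {..<N}))"
    by simp
  also have "\<dots> = (\<Sum>j<N. pmf (pmf_of_set {..<N}) j *\<^sub>R f (d j))"
    by (rule integral_measure_pmf[of "{..<N}"]) (use assms in \<open>auto simp: set_pmf_of_set lessThan_empty_iff\<close>)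
  also have "\<dots> = (\<Sum>j<N. (1 / real N) *\<^sub>R f (d j))"
    using assms by (intro sum.cong) (auto simp: lessThan_empty_iff)
  finally show ?thesis
    by (simp add: scaleR_sum_right)
qed

lemma nn_integral_norm_add_centered_square:
  fixes D :: "'c \<Rightarrow> 'v::euclidean_space"
  assumes "prob_space P" "integrable P D" "integrable P (\<lambda>s. (norm (D s))\<^sup>2)"
    and "(\<integral>s. D s \<partial>P) = 0"
  shows "(\<integral>\<^sup>+s. ennreal ((norm (w + c *\<^sub>R D s))\<^sup>2) \<partial>P)
       = ennreal ((norm w)\<^sup>2 + c\<^sup>2 * (\<integral>s. (norm (D s))\<^sup>2 \<partial>P))"
proof -
  interpret prob_space P by fact
  have eq: "(norm (w + c *\<^sub>R D s))\<^sup>2 = (norm w)\<^sup>2 + (2 * c) * inner w (D s) + c\<^sup>2 * (norm (D s))\<^sup>2" for s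
    by (simp only: power2_norm_eq_inner)
      (simp add: inner_add_left inner_add_right inner_commute algebra_simps power2_eq_square)
  have inner_int: "integrable P (\<lambda>s. inner w (D s))"
    using assms(2) by auto
  have "(\<integral>s. (norm (w + c *\<^sub>R D s))\<^sup>2 \<partial>P)
      = (norm w)\<^sup>2 + (2 * c) * (\<integral>s. inner w (D s) \<partial>P) + c\<^sup>2 * (\<integral>s. (norm (D s))\<^sup>2 \<partial>P)"
    unfolding eq using inner_int assms(3) by (simp add: prob_space)
  also have "(\<integral>s. inner w (D s) \<partial>P) = 0"
    using assms(2,4) by simp
  finally have "(\<integral>s. (norm (w + c *\<^sub>R D s))\<^sup>2 \<partial>P) = (norm w)\<^sup>2 + c\<^sup>2 * (\<integral>s. (norm (D s))\<^sup>2 \<partial>P)"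
    by simp
  moreover have "integrable P (\<lambda>s. (norm (w + c *\<^sub>R D s))\<^sup>2)"
    unfolding eq using inner_int assms(3) by auto
  ultimately show ?thesis
    using nn_integral_eq_integral[of P "\<lambda>s. (norm (w + c *\<^sub>R D s))\<^sup>2"] by simp
qed

section \<open>Sums of independent centred increments\<close>

lemma nn_integral_indep_coordinate:
  fixes Z :: "'i \<Rightarrow> 'w \<Rightarrow> 'c"
  assumes Q: "prob_space Q" and P: "prob_space P"
    and ind: "prob_space.indep_vars Q (\<lambda>_. P) Z I"
    and AI: "A \<subseteq> I" and jI: "j \<in> I" and jA: "j \<notin> A"
    and dj: "distr Q P (Z j) = P"
    and h: "h \<in> borel_measurable (Pi\<^sub>M A (\<lambda>_. P) \<Otimes>\<^sub>M P)"
  shows "(\<integral>\<^sup>+\<omega>. h (restrict (\<lambda>i. Z i \<omega>) A, Z j \<omega>) \<partial>Q)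
       = (\<integral>\<^sup>+\<omega>. (\<integral>\<^sup>+s. h (restrict (\<lambda>i. Z i \<omega>) A, s) \<partial>P) \<partial>Q)"
proof -
  interpret Q: prob_space Q by fact
  interpret P: prob_space P by fact
  let ?R = "\<lambda>\<omega>. restrict (\<lambda>i. Z i \<omega>) A"
  let ?S = "\<lambda>\<omega>. restrict (\<lambda>i. Z i \<omega>) {j}"
  let ?MA = "Pi\<^sub>M A (\<lambda>_. P)" and ?MJ = "Pi\<^sub>M {j} (\<lambda>_. P)"
  have iv: "Q.indep_var ?MA ?R ?MJ ?S"
    using Q.indep_var_restrict[OF ind, of A "{j}"] AI jI jA by auto
  have Rm: "?R \<in> measurable Q ?MA" and Sm: "?S \<in> measurable Q ?MJ"
    using iv unfolding Q.indep_var_distribution_eq by auto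
  have Zm: "Z j \<in> measurable Q P"
    using measurable_compose[OF Sm measurable_component_singleton[OF singletonI, of j "\<lambda>_. P"]] by simp
  have eq: "distr Q ?MA ?R \<Otimes>\<^sub>M distr Q ?MJ ?S = distr Q (?MA \<Otimes>\<^sub>M ?MJ) (\<lambda>x. (?R x, ?S x))"
    using iv unfolding Q.indep_var_distribution_eq by auto
  interpret E: prob_space "distr Q ?MJ ?S"
    by (rule Q.prob_space_distr[OF Sm])
  have h': "(\<lambda>p. h (fst p, snd p j)) \<in> borel_measurable (?MA \<Otimes>\<^sub>M ?MJ)"
    using h by measurable
  have inner: "(\<integral>\<^sup>+v. h (u, v j) \<partial>distr Q ?MJ ?S) = (\<integral>\<^sup>+s. h (u, s) \<partial>P)" if u: "u \<in> space ?MA" for u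
  proof -
    have hu: "(\<lambda>s. h (u, s)) \<in> borel_measurable P"
      using h u by measurable
    have "(\<integral>\<^sup>+v. h (u, v j) \<partial>distr Q ?MJ ?S) = (\<integral>\<^sup>+\<omega>. h (u, Z j \<omega>) \<partial>Q)"
      by (subst nn_integral_distr) (use Sm hu in auto)
    also have "\<dots> = (\<integral>\<^sup>+s. h (u, s) \<partial>distr Q P (Z j))"
      by (subst nn_integral_distr) (use Zm hu in auto)
    finally show ?thesis using dj by simp
  qed
  have "(\<integral>\<^sup>+\<omega>. h (?R \<omega>, Z j \<omega>) \<partial>Q) = (\<integral>\<^sup>+\<omega>. (\<lambda>p. h (fst p, snd p j)) (?R \<omega>, ?S \<omega>) \<partial>Q)"
    by simp
  also have "\<dots> = (\<integral>\<^sup>+p. h (fst p, snd p j) \<partial>distr Q (?MA \<Otimes>\<^sub>M ?MJ) (\<lambda>x. (?R x, ?S x)))"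
    by (rule nn_integral_distr[symmetric]) (use Rm Sm h' in auto)
  also have "\<dots> = (\<integral>\<^sup>+p. h (fst p, snd p j) \<partial>(distr Q ?MA ?R \<Otimes>\<^sub>M distr Q ?MJ ?S))"
    by (simp add: eq)
  also have "\<dots> = (\<integral>\<^sup>+u. (\<integral>\<^sup>+v. h (u, v j) \<partial>distr Q ?MJ ?S) \<partial>distr Q ?MA ?R)"
    by (rule E.nn_integral_fst[symmetric, where f="\<lambda>p. h (fst p, snd p j)", simplified]) (use h' in simp)
  also have "\<dots> = (\<integral>\<^sup>+u. (\<integral>\<^sup>+s. h (u, s) \<partial>P) \<partial>distr Q ?MA ?R)"
    by (rule nn_integral_cong) (simp add: inner)
  also have "\<dots> = (\<integral>\<^sup>+\<omega>. (\<integral>\<^sup>+s. h (?R \<omega>, s) \<partial>P) \<partial>Q)"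
    by (rule nn_integral_distr) (use Rm P.borel_measurable_nn_integral_fst[OF h] in auto)
  finally show ?thesis .
qed

lemma nn_integral_norm_add_indep_centered_le:
  fixes Z :: "'i \<Rightarrow> 'w \<Rightarrow> 'c" and W :: "('i \<Rightarrow> 'c) \<Rightarrow> 'v::euclidean_space"
    and D :: "('i \<Rightarrow> 'c) \<Rightarrow> 'c \<Rightarrow> 'v" and bnd :: "('i \<Rightarrow> 'c) \<Rightarrow> real"
  assumes Q: "prob_space Q" and P: "prob_space P"
    and ind: "prob_space.indep_vars Q (\<lambda>_. P) Z I"
    and AI: "A \<subseteq> I" and jI: "j \<in> I" and jA: "j \<notin> A" and dj: "distr Q P (Z j) = P"
    and Wm: "W \<in> borel_measurable (Pi\<^sub>M A (\<lambda>_. P))"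
    and Dm: "(\<lambda>p. D (fst p) (snd p)) \<in> borel_measurable (Pi\<^sub>M A (\<lambda>_. P) \<Otimes>\<^sub>M P)"
    and D_int: "\<And>u. u \<in> space (Pi\<^sub>M A (\<lambda>_. P)) \<Longrightarrow> integrable P (D u)"
    and D_sq: "\<And>u. u \<in> space (Pi\<^sub>M A (\<lambda>_. P)) \<Longrightarrow> integrable P (\<lambda>s. (norm (D u s))\<^sup>2)"
    and D_mean: "\<And>u. u \<in> space (Pi\<^sub>M A (\<lambda>_. P)) \<Longrightarrow> (\<integral>s. D u s \<partial>P) = 0"
    and D_var: "\<And>u. u \<in> space (Pi\<^sub>M A (\<lambda>_. P)) \<Longrightarrow> (\<integral>s. (norm (D u s))\<^sup>2 \<partial>P) \<le> bnd u"
  shows "(\<integral>\<^sup>+\<omega>. ennreal ((norm (W (restrict (\<lambda>i. Z i \<omega>) A)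
              + c *\<^sub>R D (restrict (\<lambda>i. Z i \<omega>) A) (Z j \<omega>)))\<^sup>2) \<partial>Q)
       \<le> (\<integral>\<^sup>+\<omega>. ennreal ((norm (W (restrict (\<lambda>i. Z i \<omega>) A)))\<^sup>2
              + c\<^sup>2 * bnd (restrict (\<lambda>i. Z i \<omega>) A)) \<partial>Q)"
proof -
  interpret Q: prob_space Q by fact
  let ?R = "\<lambda>\<omega>. restrict (\<lambda>i. Z i \<omega>) A"
  define h where "h p = ennreal ((norm (W (fst p) + c *\<^sub>R D (fst p) (snd p)))\<^sup>2)" for p
  have "(\<lambda>p. W (fst p)) \<in> borel_measurable (Pi\<^sub>M A (\<lambda>_. P) \<Otimes>\<^sub>M P)"
    by (rule measurable_compose[OF measurable_fst Wm])
  then have hm: "h \<in> borel_measurable (Pi\<^sub>M A (\<lambda>_. P) \<Otimes>\<^sub>M P)"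
    unfolding h_def using Dm by measurable
  have Rm: "?R \<in> measurable Q (Pi\<^sub>M A (\<lambda>_. P))"
    using ind AI unfolding Q.indep_vars_def by (intro measurable_restrict) auto
  have "(\<integral>\<^sup>+\<omega>. h (?R \<omega>, Z j \<omega>) \<partial>Q) = (\<integral>\<^sup>+\<omega>. (\<integral>\<^sup>+s. h (?R \<omega>, s) \<partial>P) \<partial>Q)"
    by (rule nn_integral_indep_coordinate[OF Q P ind AI jI jA dj hm])
  also have "\<dots> \<le> (\<integral>\<^sup>+\<omega>. ennreal ((norm (W (?R \<omega>)))\<^sup>2 + c\<^sup>2 * bnd (?R \<omega>)) \<partial>Q)"
  proof (rule nn_integral_mono)
    fix \<omega> assume "\<omega> \<in> space Q"
    then have u: "?R \<omega> \<in> space (Pi\<^sub>M A (\<lambda>_. P))"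
      by (rule measurable_space[OF Rm])
    have "(\<integral>\<^sup>+s. h (?R \<omega>, s) \<partial>P) = ennreal ((norm (W (?R \<omega>)))\<^sup>2 + c\<^sup>2 * (\<integral>s. (norm (D (?R \<omega>) s))\<^sup>2 \<partial>P))"
      unfolding h_def fst_conv snd_conv
      by (rule nn_integral_norm_add_centered_square[OF P D_int[OF u] D_sq[OF u] D_mean[OF u]])
    also have "\<dots> \<le> ennreal ((norm (W (?R \<omega>)))\<^sup>2 + c\<^sup>2 * bnd (?R \<omega>))"
      using D_var[OF u] by (intro ennreal_leI add_left_mono mult_left_mono) auto
    finally show "(\<integral>\<^sup>+s. h (?R \<omega>, s) \<partial>P) \<le> ennreal ((norm (W (?R \<omega>)))\<^sup>2 + c\<^sup>2 * bnd (?R \<omega>))" .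
  qed
  finally show ?thesis
    unfolding h_def by simp
qed

lemma measurable_restrict_partial_sum:
  fixes a :: "('i \<Rightarrow> 'c) \<Rightarrow> 'v::euclidean_space" and D :: "('i \<Rightarrow> 'c) \<Rightarrow> 'c \<Rightarrow> 'v"
  assumes "A \<subseteq> B" "idx ` {..<m} \<subseteq> B"
    and am: "a \<in> borel_measurable (Pi\<^sub>M A (\<lambda>_. P))"
    and Dm: "(\<lambda>p. D (fst p) (snd p)) \<in> borel_measurable (Pi\<^sub>M A (\<lambda>_. P) \<Otimes>\<^sub>M P)"
  shows "(\<lambda>p. D (restrict (fst p) A) (snd p)) \<in> borel_measurable (Pi\<^sub>M B (\<lambda>_. P) \<Otimes>\<^sub>M P)"
    and "(\<lambda>u. a (restrict u A) + c *\<^sub>R (\<Sum>i<m. D (restrict u A) (u (idx i)))) \<in> borel_measurable (Pi\<^sub>M B (\<lambda>_. P))"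
proof -
  have restrict: "(\<lambda>u. restrict u A) \<in> measurable (Pi\<^sub>M B (\<lambda>_. P)) (Pi\<^sub>M A (\<lambda>_. P))"
    using assms(1) by (rule measurable_restrict_subset)
  have "(\<lambda>p. (restrict (fst p) A, snd p)) \<in> measurable (Pi\<^sub>M B (\<lambda>_. P) \<Otimes>\<^sub>M P) (Pi\<^sub>M A (\<lambda>_. P) \<Otimes>\<^sub>M P)"
    using assms(1)
    by (intro measurable_Pair measurable_compose[OF measurable_fst measurable_restrict_subset] measurable_snd)
  from measurable_compose[OF this Dm] show "(\<lambda>p. D (restrict (fst p) A) (snd p)) \<in> borel_measurable (Pi\<^sub>M B (\<lambda>_. P) \<Otimes>\<^sub>M P)"
    by simp
  have "(\<lambda>u. (restrict u A, u (idx i))) \<in> measurable (Pi\<^sub>M B (\<lambda>_. P)) (Pi\<^sub>M A (\<lambda>_. P) \<Otimes>\<^sub>M P)" if "i < m" for i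
    using restrict that assms(2) by (intro measurable_Pair) (auto intro!: measurable_component_singleton)
  from measurable_compose[OF this Dm]
  have "(\<lambda>u. D (restrict u A) (u (idx i))) \<in> borel_measurable (Pi\<^sub>M B (\<lambda>_. P))" if "i < m" for i
    using that by simp
  then show "(\<lambda>u. a (restrict u A) + c *\<^sub>R (\<Sum>i<m. D (restrict u A) (u (idx i)))) \<in> borel_measurable (Pi\<^sub>M B (\<lambda>_. P))"
    using measurable_compose[OF restrict am]
    by (intro borel_measurable_add borel_measurable_scaleR borel_measurable_sum) auto
qed

lemma nn_integral_norm_add_indep_centered_sum_step:
  fixes Z :: "'i \<Rightarrow> 'w \<Rightarrow> 'c" and a :: "('i \<Rightarrow> 'c) \<Rightarrow> 'v::euclidean_space"
    and D :: "('i \<Rightarrow> 'c) \<Rightarrow> 'c \<Rightarrow> 'v" and bnd :: "('i \<Rightarrow> 'c) \<Rightarrow> real"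
    and idx :: "nat \<Rightarrow> 'i"
  assumes Q: "prob_space Q" and P: "prob_space P"
    and ind: "prob_space.indep_vars Q (\<lambda>_. P) Z I"
    and AI: "A \<subseteq> I" and idx_I: "\<And>i. i \<le> m \<Longrightarrow> idx i \<in> I" and idx_A: "\<And>i. i \<le> m \<Longrightarrow> idx i \<notin> A"
    and inj: "inj idx"
    and d_idx: "distr Q P (Z (idx m)) = P"
    and am: "a \<in> borel_measurable (Pi\<^sub>M A (\<lambda>_. P))"
    and Dm: "(\<lambda>p. D (fst p) (snd p)) \<in> borel_measurable (Pi\<^sub>M A (\<lambda>_. P) \<Otimes>\<^sub>M P)"
    and D_int: "\<And>u. u \<in> space (Pi\<^sub>M A (\<lambda>_. P)) \<Longrightarrow> integrable P (D u)"
    and D_sq: "\<And>u. u \<in> space (Pi\<^sub>M A (\<lambda>_. P)) \<Longrightarrow> integrable P (\<lambda>s. (norm (D u s))\<^sup>2)"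
    and D_mean: "\<And>u. u \<in> space (Pi\<^sub>M A (\<lambda>_. P)) \<Longrightarrow> (\<integral>s. D u s \<partial>P) = 0"
    and D_var: "\<And>u. u \<in> space (Pi\<^sub>M A (\<lambda>_. P)) \<Longrightarrow> (\<integral>s. (norm (D u s))\<^sup>2 \<partial>P) \<le> bnd u"
  shows "(\<integral>\<^sup>+\<omega>. ennreal ((norm (a (restrict (\<lambda>i. Z i \<omega>) A)
              + c *\<^sub>R (\<Sum>i<Suc m. D (restrict (\<lambda>i. Z i \<omega>) A) (Z (idx i) \<omega>))))\<^sup>2) \<partial>Q)
       \<le> (\<integral>\<^sup>+\<omega>. ennreal ((norm (a (restrict (\<lambda>i. Z i \<omega>) A)
              + c *\<^sub>R (\<Sum>i<m. D (restrict (\<lambda>i. Z i \<omega>) A) (Z (idx i) \<omega>))))\<^sup>2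
              + c\<^sup>2 * bnd (restrict (\<lambda>i. Z i \<omega>) A)) \<partial>Q)"
proof -
  define B where "B = A \<union> idx ` {..<m}"
  define W where "W u = a (restrict u A) + c *\<^sub>R (\<Sum>i<m. D (restrict u A) (u (idx i)))" for u
  have BI: "B \<subseteq> I" and jI: "idx m \<in> I" and jB: "idx m \<notin> B"
    using AI idx_I idx_A inj by (auto simp: B_def inj_def)
  have Wm: "(\<lambda>p. D (restrict (fst p) A) (snd p)) \<in> borel_measurable (Pi\<^sub>M B (\<lambda>_. P) \<Otimes>\<^sub>M P)"
    "W \<in> borel_measurable (Pi\<^sub>M B (\<lambda>_. P))"
    unfolding W_def[abs_def] by (rule measurable_restrict_partial_sum[OF _ _ am Dm]; auto simp: B_def)+
  have RA: "restrict (restrict (\<lambda>i. Z i \<omega>) B) A = restrict (\<lambda>i. Z i \<omega>) A" for \<omega>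
    by (auto simp: B_def restrict_def fun_eq_iff)
  have WR: "W (restrict (\<lambda>i. Z i \<omega>) B)
      = a (restrict (\<lambda>i. Z i \<omega>) A) + c *\<^sub>R (\<Sum>i<m. D (restrict (\<lambda>i. Z i \<omega>) A) (Z (idx i) \<omega>))" for \<omega>
    unfolding W_def RA by (auto simp: B_def intro!: sum.cong)
  have u: "restrict u A \<in> space (Pi\<^sub>M A (\<lambda>_. P))" if "u \<in> space (Pi\<^sub>M B (\<lambda>_. P))" for u
    using measurable_space[OF measurable_restrict_subset that] by (auto simp: B_def)
  show ?thesis
    using nn_integral_norm_add_indep_centered_le[OF Q P ind BI jI jB d_idx Wm(2) Wm(1)
        D_int[OF u] D_sq[OF u] D_mean[OF u] D_var[OF u], of c, unfolded RA]
    by (simp add: WR algebra_simps scaleR_add_right)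
qed

lemma nn_integral_norm_add_indep_centered_sum_le:
  fixes Z :: "'i \<Rightarrow> 'w \<Rightarrow> 'c" and a :: "('i \<Rightarrow> 'c) \<Rightarrow> 'v::euclidean_space"
    and D :: "('i \<Rightarrow> 'c) \<Rightarrow> 'c \<Rightarrow> 'v" and bnd :: "('i \<Rightarrow> 'c) \<Rightarrow> real"
    and idx :: "nat \<Rightarrow> 'i"
  assumes Q: "prob_space Q" and P: "prob_space P"
    and ind: "prob_space.indep_vars Q (\<lambda>_. P) Z I"
    and AI: "A \<subseteq> I" and idx_I: "\<And>i. i < n \<Longrightarrow> idx i \<in> I" and idx_A: "\<And>i. i < n \<Longrightarrow> idx i \<notin> A"
    and inj: "inj idx"
    and d_idx: "\<And>i. i < n \<Longrightarrow> distr Q P (Z (idx i)) = P"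
    and am: "a \<in> borel_measurable (Pi\<^sub>M A (\<lambda>_. P))"
    and Dm: "(\<lambda>p. D (fst p) (snd p)) \<in> borel_measurable (Pi\<^sub>M A (\<lambda>_. P) \<Otimes>\<^sub>M P)"
    and bm: "bnd \<in> borel_measurable (Pi\<^sub>M A (\<lambda>_. P))"
    and D_int: "\<And>u. u \<in> space (Pi\<^sub>M A (\<lambda>_. P)) \<Longrightarrow> integrable P (D u)"
    and D_sq: "\<And>u. u \<in> space (Pi\<^sub>M A (\<lambda>_. P)) \<Longrightarrow> integrable P (\<lambda>s. (norm (D u s))\<^sup>2)"
    and D_mean: "\<And>u. u \<in> space (Pi\<^sub>M A (\<lambda>_. P)) \<Longrightarrow> (\<integral>s. D u s \<partial>P) = 0"
    and D_var: "\<And>u. u \<in> space (Pi\<^sub>M A (\<lambda>_. P)) \<Longrightarrow> (\<integral>s. (norm (D u s))\<^sup>2 \<partial>P) \<le> bnd u"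
  shows "(\<integral>\<^sup>+\<omega>. ennreal ((norm (a (restrict (\<lambda>i. Z i \<omega>) A)
              + c *\<^sub>R (\<Sum>i<n. D (restrict (\<lambda>i. Z i \<omega>) A) (Z (idx i) \<omega>))))\<^sup>2) \<partial>Q)
       \<le> (\<integral>\<^sup>+\<omega>. ennreal ((norm (a (restrict (\<lambda>i. Z i \<omega>) A)))\<^sup>2
              + c\<^sup>2 * real n * bnd (restrict (\<lambda>i. Z i \<omega>) A)) \<partial>Q)"
proof -
  interpret Q: prob_space Q by fact
  let ?R = "\<lambda>\<omega>. restrict (\<lambda>i. Z i \<omega>) A"
  define S where "S m \<omega> = a (?R \<omega>) + c *\<^sub>R (\<Sum>i<m. D (?R \<omega>) (Z (idx i) \<omega>))" for m \<omega>
  have bnd_nonneg: "0 \<le> bnd u" if "u \<in> space (Pi\<^sub>M A (\<lambda>_. P))" for u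
  proof -
    have "0 \<le> (\<integral>s. (norm (D u s))\<^sup>2 \<partial>P)"
      by (intro integral_nonneg_AE) auto
    then show ?thesis
      using D_var[OF that] by linarith
  qed
  have Rm: "?R \<in> measurable Q (Pi\<^sub>M A (\<lambda>_. P))"
    using ind AI unfolding Q.indep_vars_def by (intro measurable_restrict) auto
  have R_space: "?R \<omega> \<in> space (Pi\<^sub>M A (\<lambda>_. P))" if "\<omega> \<in> space Q" for \<omega>
    using measurable_space[OF Rm that] .
  have Zm: "Z (idx i) \<in> measurable Q P" if "i < n" for i
    using ind idx_I[OF that] unfolding Q.indep_vars_def by auto
  have Sm: "S m \<in> borel_measurable Q" if "m \<le> n" for m
    unfolding S_def[abs_def] using measurable_compose[OF Rm am] that
      measurable_compose[OF measurable_Pair[OF Rm Zm] Dm]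
    by (intro borel_measurable_add borel_measurable_scaleR borel_measurable_sum) auto
  have bRm: "(\<lambda>\<omega>. c\<^sup>2 * bnd (?R \<omega>)) \<in> borel_measurable Q"
    using measurable_compose[OF Rm bm] by simp
  have "(\<integral>\<^sup>+\<omega>. ennreal ((norm (S m \<omega>))\<^sup>2) \<partial>Q)
      \<le> (\<integral>\<^sup>+\<omega>. ennreal ((norm (a (?R \<omega>)))\<^sup>2 + c\<^sup>2 * real m * bnd (?R \<omega>)) \<partial>Q)" if "m \<le> n" for m
    using that
  proof (induction m)
    case (Suc m)
    have "(\<integral>\<^sup>+\<omega>. ennreal ((norm (S (Suc m) \<omega>))\<^sup>2) \<partial>Q)
        \<le> (\<integral>\<^sup>+\<omega>. ennreal ((norm (S m \<omega>))\<^sup>2 + c\<^sup>2 * bnd (?R \<omega>)) \<partial>Q)"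
      unfolding S_def using Suc.prems
      by (intro nn_integral_norm_add_indep_centered_sum_step[OF Q P ind AI _ _ inj d_idx am Dm D_int D_sq D_mean D_var])
        (auto intro!: idx_I idx_A)
    also have "\<dots> = (\<integral>\<^sup>+\<omega>. ennreal ((norm (S m \<omega>))\<^sup>2) \<partial>Q) + (\<integral>\<^sup>+\<omega>. ennreal (c\<^sup>2 * bnd (?R \<omega>)) \<partial>Q)"
      using Sm[of m] Suc.prems bRm bnd_nonneg R_space by (intro nn_integral_ennreal_add) auto
    also have "\<dots> \<le> (\<integral>\<^sup>+\<omega>. ennreal ((norm (a (?R \<omega>)))\<^sup>2 + c\<^sup>2 * real m * bnd (?R \<omega>)) \<partial>Q)
        + (\<integral>\<^sup>+\<omega>. ennreal (c\<^sup>2 * bnd (?R \<omega>)) \<partial>Q)"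
      using Suc by (intro add_right_mono) (simp add: restrict_def)
    also have "\<dots> = (\<integral>\<^sup>+\<omega>. ennreal ((norm (a (?R \<omega>)))\<^sup>2 + c\<^sup>2 * real m * bnd (?R \<omega>) + c\<^sup>2 * bnd (?R \<omega>)) \<partial>Q)"
      using measurable_compose[OF Rm am] measurable_compose[OF Rm bm] bRm bnd_nonneg R_space
      by (intro nn_integral_ennreal_add[symmetric]) auto
    finally show ?case
      by (simp add: algebra_simps restrict_def)
  qed (simp add: S_def)
  from this[of n] show ?thesis
    by (simp add: S_def)
qed

locale spider_problem =
  fixes X :: "'a::euclidean_space set" and Y :: "'b::euclidean_space set"
    and P :: "'c measure" and Q :: "'w measure"
    and gx :: "'a \<Rightarrow> 'b \<Rightarrow> 'c \<Rightarrow> 'a" and gy :: "'a \<Rightarrow> 'b \<Rightarrow> 'c \<Rightarrow> 'b"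
    and Fx :: "'a \<Rightarrow> 'b \<Rightarrow> 'a" and Fy :: "'a \<Rightarrow> 'b \<Rightarrow> 'b"
    and Lx Ly \<sigma>x \<sigma>y ax ay \<beta> r :: real
    and K T M :: nat
    and x0 z0 :: 'a and y0 :: 'b
  assumes X: "X \<noteq> {}" "closed X" "convex X"
    and Y: "Y \<noteq> {}" "closed Y" "convex Y" "bounded Y"
    and P: "prob_space P" and Q: "prob_space Q"
    and gx_meas: "(\<lambda>(x, y, s). gx x y s) \<in> borel_measurable (borel \<Otimes>\<^sub>M (borel \<Otimes>\<^sub>M P))"
    and gy_meas: "(\<lambda>(x, y, s). gy x y s) \<in> borel_measurable (borel \<Otimes>\<^sub>M (borel \<Otimes>\<^sub>M P))"
    and gx_sq: "\<And>x y. x \<in> X \<Longrightarrow> y \<in> Y \<Longrightarrow> integrable P (\<lambda>s. (norm (gx x y s))\<^sup>2)"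
    and gy_sq: "\<And>x y. x \<in> X \<Longrightarrow> y \<in> Y \<Longrightarrow> integrable P (\<lambda>s. (norm (gy x y s))\<^sup>2)"
    and Lxx: "\<And>x1 x2 y. x1 \<in> X \<Longrightarrow> x2 \<in> X \<Longrightarrow> y \<in> Y \<Longrightarrow>
                 (\<integral>s. (norm (gx x1 y s - gx x2 y s))\<^sup>2 \<partial>P) \<le> Lx\<^sup>2 * (norm (x1 - x2))\<^sup>2"
    and Lxy: "\<And>x y1 y2. x \<in> X \<Longrightarrow> y1 \<in> Y \<Longrightarrow> y2 \<in> Y \<Longrightarrow>
                 (\<integral>s. (norm (gx x y1 s - gx x y2 s))\<^sup>2 \<partial>P) \<le> Ly\<^sup>2 * (norm (y1 - y2))\<^sup>2"
    and Ly: "\<And>x1 x2 y1 y2. x1 \<in> X \<Longrightarrow> x2 \<in> X \<Longrightarrow> y1 \<in> Y \<Longrightarrow> y2 \<in> Y \<Longrightarrow>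
                 (\<integral>s. (norm (gy x1 y1 s - gy x2 y2 s))\<^sup>2 \<partial>P)
                   \<le> Ly\<^sup>2 * ((norm (x1 - x2))\<^sup>2 + (norm (y1 - y2))\<^sup>2)"
    and unbiased_x: "\<And>x y. x \<in> X \<Longrightarrow> y \<in> Y \<Longrightarrow> (\<integral>s. gx x y s \<partial>P) = Fx x y"
    and unbiased_y: "\<And>x y. x \<in> X \<Longrightarrow> y \<in> Y \<Longrightarrow> (\<integral>s. gy x y s \<partial>P) = Fy x y"
    and var_x: "\<And>x y. x \<in> X \<Longrightarrow> y \<in> Y \<Longrightarrow> (\<integral>s. (norm (gx x y s - Fx x y))\<^sup>2 \<partial>P) \<le> \<sigma>x\<^sup>2"
    and var_y: "\<And>x y. x \<in> X \<Longrightarrow> y \<in> Y \<Longrightarrow> (\<integral>s. (norm (gy x y s - Fy x y))\<^sup>2 \<partial>P) \<le> \<sigma>y\<^sup>2"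
    and step_pos: "0 < ax" "0 < ay" and K_pos: "0 < K" and T_pos: "0 < T" and M_eq_T: "M = T"
    and start: "x0 \<in> X" "y0 \<in> Y"
begin

lemma M_pos: "0 < M"
  using T_pos M_eq_T by simp

lemma gx_measurable: "gx x y \<in> borel_measurable P"
  using measurable_compose_jointly[OF gx_meas, of "\<lambda>_. x" P "\<lambda>_. y" "\<lambda>s. s"] by simp

lemma gx_increment_sq_le:
  assumes "x1 \<in> X" "x2 \<in> X" "y1 \<in> Y" "y2 \<in> Y"
  shows "(\<integral>s. (norm (gx x1 y1 s - gx x2 y2 s))\<^sup>2 \<partial>P) \<le> 2 * Lx\<^sup>2 * (norm (x1 - x2))\<^sup>2 + 2 * Ly\<^sup>2 * (norm (y1 - y2))\<^sup>2"
proof -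
  have sq: "integrable P (\<lambda>s. (norm (gx x y s - gx x' y' s))\<^sup>2)" if "x \<in> X" "x' \<in> X" "y \<in> Y" "y' \<in> Y" for x x' y y'
    using square_integrable_diff[of P "gx x y" "gx x' y'"] gx_measurable gx_sq that
    unfolding square_integrable_def by auto
  have "(\<integral>s. (norm (gx x1 y1 s - gx x2 y2 s))\<^sup>2 \<partial>P)
      \<le> (\<integral>s. 2 * ((norm (gx x1 y1 s - gx x2 y1 s))\<^sup>2 + (norm (gx x2 y1 s - gx x2 y2 s))\<^sup>2) \<partial>P)"
  proof (rule integral_mono)
    show "integrable P (\<lambda>s. (norm (gx x1 y1 s - gx x2 y2 s))\<^sup>2)"
      "integrable P (\<lambda>s. 2 * ((norm (gx x1 y1 s - gx x2 y1 s))\<^sup>2 + (norm (gx x2 y1 s - gx x2 y2 s))\<^sup>2))"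
      using sq assms by auto
    show "(norm (gx x1 y1 s - gx x2 y2 s))\<^sup>2
        \<le> 2 * ((norm (gx x1 y1 s - gx x2 y1 s))\<^sup>2 + (norm (gx x2 y1 s - gx x2 y2 s))\<^sup>2)" for s
      using power2_norm_add_le[of "gx x1 y1 s - gx x2 y1 s" "gx x2 y1 s - gx x2 y2 s"] by simp
  qed
  also have "\<dots> = 2 * (\<integral>s. (norm (gx x1 y1 s - gx x2 y1 s))\<^sup>2 \<partial>P) + 2 * (\<integral>s. (norm (gx x2 y1 s - gx x2 y2 s))\<^sup>2 \<partial>P)"
    using sq assms by simp
  also have "\<dots> \<le> 2 * (Lx\<^sup>2 * (norm (x1 - x2))\<^sup>2) + 2 * (Ly\<^sup>2 * (norm (y1 - y2))\<^sup>2)"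
    using Lxx[of x1 x2 y1] Lxy[of x2 y1 y2] assms by simp
  finally show ?thesis
    by simp
qed

end

(* At the start of epoch k the estimator reads init_sample xi k i, which is
   xi k 0 i in the online setting and the i-th data point in the finite-sum setting.  The state at
   step t includes the estimator computed from the samples of step t, so it is a function of the
   samples in drawn_before (Suc t) only; the samples read at step t + 1 lie outside this set, which
   is what makes them independent of the state. *)

locale spider_gda = spider_problem +
  fixes Cx Cy :: real and B :: nat
    and \<xi> :: "'w \<Rightarrow> nat \<Rightarrow> nat \<Rightarrow> nat \<Rightarrow> 'c"
    and I :: "(nat \<times> nat \<times> nat) set"
    and init_sample :: "(nat \<Rightarrow> nat \<Rightarrow> nat \<Rightarrow> 'c) \<Rightarrow> nat \<Rightarrow> nat \<Rightarrow> 'c"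
  assumes indep: "prob_space.indep_vars Q (\<lambda>_. P) (\<lambda>(k, \<tau>, i) \<omega>. \<xi> \<omega> k \<tau> i) I"
    and distr_sample: "\<And>k \<tau> i. (k, \<tau>, i) \<in> I \<Longrightarrow> distr Q P (\<lambda>\<omega>. \<xi> \<omega> k \<tau> i) = P"
    and inner_samples_in_I: "\<And>k \<tau> i. k < K \<Longrightarrow> 0 < \<tau> \<Longrightarrow> \<tau> < T \<Longrightarrow> i < M \<Longrightarrow> (k, \<tau>, i) \<in> I"
    and init_sample_local: "\<And>xi xi' k i. k < K \<Longrightarrow> i < B \<Longrightarrow>
        (\<And>i'. (k, 0, i') \<in> I \<Longrightarrow> xi k 0 i' = xi' k 0 i') \<Longrightarrow> init_sample xi k i = init_sample xi' k i"
    and init_sample_meas: "\<And>A k i. k < K \<Longrightarrow> i < B \<Longrightarrow> {j \<in> I. fst j = k \<and> fst (snd j) = 0} \<subseteq> A \<Longrightarrow>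
        (\<lambda>u. init_sample (\<lambda>k \<tau> i. u (k, \<tau>, i)) k i) \<in> measurable (Pi\<^sub>M A (\<lambda>_. P)) P"
    and setting: "(0 < B \<and> Cx = \<sigma>x\<^sup>2 / real B \<and> Cy = \<sigma>y\<^sup>2 / real B
                    \<and> (\<forall>xi k i. init_sample xi k i = xi k 0 i) \<and> (\<forall>k<K. \<forall>i<B. (k, 0, i) \<in> I))
             \<or> (Cx = 0 \<and> Cy = 0 \<and> (\<forall>xi k x y. x \<in> X \<longrightarrow> y \<in> Y \<longrightarrow>
                   (1 / real B) *\<^sub>R (\<Sum>i<B. gx x y (init_sample xi k i)) = Fx x y \<and>
                   (1 / real B) *\<^sub>R (\<Sum>i<B. gy x y (init_sample xi k i)) = Fy x y))"
begin

definition "sample = (\<lambda>(k, \<tau>, i) \<omega>. \<xi> \<omega> k \<tau> i)"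
definition "sample_array u = (\<lambda>k \<tau> i. u (k, \<tau>, i))"
definition "samples_on A \<omega> = restrict (\<lambda>j. sample j \<omega>) A"
definition "drawn_before t = {j \<in> I. fst j * T + fst (snd j) < t}"

abbreviation "sample_space A \<equiv> Pi\<^sub>M A (\<lambda>_. P)"

definition "init_est xi k x y =
  ((1 / real B) *\<^sub>R (\<Sum>i<B. gx x y (init_sample xi k i)), (1 / real B) *\<^sub>R (\<Sum>i<B. gy x y (init_sample xi k i)))"

definition "state xi = alg X Y ax ay \<beta> r T M gx gy (init_est xi) xi x0 y0 z0"
definition "x_seq xi t = fst (state xi t)"
definition "y_seq xi t = fst (snd (state xi t))"
definition "z_seq xi t = fst (snd (snd (state xi t)))"
definition "Gx_seq xi t = fst (snd (snd (snd (state xi t))))"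
definition "Gy_seq xi t = snd (snd (snd (snd (state xi t))))"

lemma sample_apply [simp]: "sample (k, \<tau>, i) \<omega> = \<xi> \<omega> k \<tau> i"
  by (simp add: sample_def)

lemma sample_array_apply: "sample_array u k \<tau> i = u (k, \<tau>, i)"
  by (simp add: sample_array_def)

lemma indep_sample: "prob_space.indep_vars Q (\<lambda>_. P) sample I"
  using indep by (simp add: sample_def)

lemma sample_distr: "j \<in> I \<Longrightarrow> distr Q P (sample j) = P"
  using distr_sample by (cases j) (auto simp: sample_def)

lemma samples_on_measurable: "A \<subseteq> I \<Longrightarrow> samples_on A \<in> measurable Q (sample_space A)"
  unfolding samples_on_def using indep_sample unfolding prob_space.indep_vars_def[OF Q]
  by (intro measurable_restrict) auto

lemma drawn_before_subset: "drawn_before t \<subseteq> I"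
  by (auto simp: drawn_before_def)

lemma drawn_before_mono: "t \<le> t' \<Longrightarrow> drawn_before t \<subseteq> drawn_before t'"
  by (auto simp: drawn_before_def)

lemma epoch_start_drawn_before:
  "j \<in> I \<Longrightarrow> fst j = t div T \<Longrightarrow> fst (snd j) = 0 \<Longrightarrow> j \<in> drawn_before (Suc t)"
  using div_times_less_eq_dividend[of t T] by (auto simp: drawn_before_def less_Suc_eq_le)

lemma epoch_index_less: "t < K * T \<Longrightarrow> t div T < K"
  using T_pos by (simp add: less_mult_imp_div_less)

lemma inner_sample_drawn_before:
  assumes "t < K * T" "t mod T \<noteq> 0" "i < M"
  shows "(t div T, t mod T, i) \<in> drawn_before (Suc t)"
proof -
  have "(t div T, t mod T, i) \<in> I"
    using assms T_pos M_eq_T by (intro inner_samples_in_I epoch_index_less) auto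
  then show ?thesis
    by (simp add: drawn_before_def)
qed

lemma state_0:
  "x_seq xi 0 = x0" "y_seq xi 0 = y0" "z_seq xi 0 = z0"
  "Gx_seq xi 0 = fst (init_est xi 0 x0 y0)" "Gy_seq xi 0 = snd (init_est xi 0 x0 y0)"
  by (simp_all add: x_seq_def y_seq_def z_seq_def Gx_seq_def Gy_seq_def state_def)

lemma state_Suc:
  "x_seq xi (Suc t) = closest_point X (x_seq xi t - ax *\<^sub>R (Gx_seq xi t + r *\<^sub>R (x_seq xi t - z_seq xi t)))"
  "y_seq xi (Suc t) = closest_point Y (y_seq xi t + ay *\<^sub>R Gy_seq xi t)"
  "z_seq xi (Suc t) = z_seq xi t + \<beta> *\<^sub>R (x_seq xi (Suc t) - z_seq xi t)"
  "Gx_seq xi (Suc t) = (if Suc t mod T = 0 then fst (init_est xi (Suc t div T) (x_seq xi (Suc t)) (y_seq xi (Suc t)))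
      else (1 / real M) *\<^sub>R (\<Sum>i<M. gx (x_seq xi (Suc t)) (y_seq xi (Suc t)) (xi (Suc t div T) (Suc t mod T) i)
                                   - gx (x_seq xi t) (y_seq xi t) (xi (Suc t div T) (Suc t mod T) i)) + Gx_seq xi t)"
  "Gy_seq xi (Suc t) = (if Suc t mod T = 0 then snd (init_est xi (Suc t div T) (x_seq xi (Suc t)) (y_seq xi (Suc t)))
      else (1 / real M) *\<^sub>R (\<Sum>i<M. gy (x_seq xi (Suc t)) (y_seq xi (Suc t)) (xi (Suc t div T) (Suc t mod T) i)
                                   - gy (x_seq xi t) (y_seq xi t) (xi (Suc t div T) (Suc t mod T) i)) + Gy_seq xi t)"
  by (cases "state xi t"; simp add: x_seq_def y_seq_def z_seq_def Gx_seq_def Gy_seq_def state_def Let_def)+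

lemma state_epoch_start:
  "Gx_seq xi (k * T) = fst (init_est xi k (x_seq xi (k * T)) (y_seq xi (k * T)))"
  "Gy_seq xi (k * T) = snd (init_est xi k (x_seq xi (k * T)) (y_seq xi (k * T)))"
proof (atomize (full), cases k)
  case (Suc k')
  then obtain s where s: "k * T = Suc s"
    using T_pos by (metis gr0_conv_Suc mult_pos_pos zero_less_Suc)
  have "Suc s mod T = 0" "Suc s div T = k"
    using T_pos s[symmetric] by auto
  then show "Gx_seq xi (k * T) = fst (init_est xi k (x_seq xi (k * T)) (y_seq xi (k * T))) \<and>
    Gy_seq xi (k * T) = snd (init_est xi k (x_seq xi (k * T)) (y_seq xi (k * T)))"
    unfolding s state_Suc(4,5) by simp
qed (simp add: state_0)

lemma x_seq_in: "x_seq xi t \<in> X"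
  by (cases t) (auto simp: state_0 state_Suc start closest_point_in_set X)

lemma y_seq_in: "y_seq xi t \<in> Y"
  by (cases t) (auto simp: state_0 state_Suc start closest_point_in_set Y)

lemma samples_on_apply [simp]: "j \<in> A \<Longrightarrow> samples_on A \<omega> j = sample j \<omega>"
  by (simp add: samples_on_def)

lemma init_est_local:
  assumes "k < K" and "\<And>i. (k, 0, i) \<in> I \<Longrightarrow> xi k 0 i = xi' k 0 i"
  shows "init_est xi k = init_est xi' k"
proof -
  have "init_sample xi k i = init_sample xi' k i" if "i < B" for i
    using init_sample_local[where xi=xi and xi'=xi' and k=k, OF assms(1) that assms(2)] .
  then show ?thesis
    unfolding init_est_def fun_eq_iff by (auto intro!: sum.cong)
qed

lemma state_local:
  assumes "t < K * T" and "drawn_before (Suc t) \<subseteq> A"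
  shows "state (sample_array (samples_on A \<omega>)) t = state (\<xi> \<omega>) t"
  using assms
proof (induction t)
  case 0
  have "(0, 0, i) \<in> A" if "(0, 0, i) \<in> I" for i
    using 0(2) epoch_start_drawn_before[of "(0, 0, i)" 0] that by auto
  then have "init_est (sample_array (samples_on A \<omega>)) 0 = init_est (\<xi> \<omega>) 0"
    using K_pos by (intro init_est_local) (auto simp: sample_array_apply)
  then show ?case
    by (simp add: state_def)
next
  case (Suc t)
  have IH: "state (sample_array (samples_on A \<omega>)) t = state (\<xi> \<omega>) t"
    using Suc.prems drawn_before_mono[of "Suc t" "Suc (Suc t)"] by (intro Suc.IH) auto
  have k: "Suc t div T < K"
    using Suc.prems(1) by (rule epoch_index_less)
  show ?case
  proof (cases "Suc t mod T = 0")
    case True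
    have "(Suc t div T, 0, i) \<in> A" if "(Suc t div T, 0, i) \<in> I" for i
      using Suc.prems(2) epoch_start_drawn_before[of "(Suc t div T, 0, i)" "Suc t"] that by auto
    then have "init_est (sample_array (samples_on A \<omega>)) (Suc t div T) = init_est (\<xi> \<omega>) (Suc t div T)"
      by (intro init_est_local[OF k]) (auto simp: sample_array_apply)
    then show ?thesis
      using IH True by (simp add: state_def Let_def split: prod.split)
  next
    case False
    let ?u = "sample_array (samples_on A \<omega>)" and ?k = "Suc t div T" and ?\<tau> = "Suc t mod T"
    have "?u ?k ?\<tau> i = \<xi> \<omega> ?k ?\<tau> i" if "i \<in> {..<M}" for i
      using Suc.prems inner_sample_drawn_before[OF _ False, of i] that by (auto simp: sample_array_apply)
    then have "(\<Sum>i<M. gx x' y' (?u ?k ?\<tau> i) - gx x y (?u ?k ?\<tau> i))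
        = (\<Sum>i<M. gx x' y' (\<xi> \<omega> ?k ?\<tau> i) - gx x y (\<xi> \<omega> ?k ?\<tau> i))"
      and "(\<Sum>i<M. gy x' y' (?u ?k ?\<tau> i) - gy x y (?u ?k ?\<tau> i))
        = (\<Sum>i<M. gy x' y' (\<xi> \<omega> ?k ?\<tau> i) - gy x y (\<xi> \<omega> ?k ?\<tau> i))" for x' y' x y
      by (auto intro!: sum.cong)
    then show ?thesis
      using IH False by (simp add: state_def Let_def split: prod.split)
  qed
qed

lemma position_local:
  assumes "t \<le> K * T" and "drawn_before t \<subseteq> A"
  shows "x_seq (sample_array (samples_on A \<omega>)) t = x_seq (\<xi> \<omega>) t"
    and "y_seq (sample_array (samples_on A \<omega>)) t = y_seq (\<xi> \<omega>) t"
    and "z_seq (sample_array (samples_on A \<omega>)) t = z_seq (\<xi> \<omega>) t"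
proof (atomize (full), cases t)
  case (Suc t')
  with assms have "state (sample_array (samples_on A \<omega>)) t' = state (\<xi> \<omega>) t'"
    by (intro state_local) auto
  then have "x_seq (sample_array (samples_on A \<omega>)) t' = x_seq (\<xi> \<omega>) t'
    \<and> y_seq (sample_array (samples_on A \<omega>)) t' = y_seq (\<xi> \<omega>) t'
    \<and> z_seq (sample_array (samples_on A \<omega>)) t' = z_seq (\<xi> \<omega>) t'
    \<and> Gx_seq (sample_array (samples_on A \<omega>)) t' = Gx_seq (\<xi> \<omega>) t'
    \<and> Gy_seq (sample_array (samples_on A \<omega>)) t' = Gy_seq (\<xi> \<omega>) t'"
    by (simp add: x_seq_def y_seq_def z_seq_def Gx_seq_def Gy_seq_def)
  with Suc show "x_seq (sample_array (samples_on A \<omega>)) t = x_seq (\<xi> \<omega>) t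
    \<and> y_seq (sample_array (samples_on A \<omega>)) t = y_seq (\<xi> \<omega>) t
    \<and> z_seq (sample_array (samples_on A \<omega>)) t = z_seq (\<xi> \<omega>) t"
    by (simp add: state_Suc)
qed (simp add: state_0)

lemma init_est_measurable:
  assumes "k < K" and "{j \<in> I. fst j = k \<and> fst (snd j) = 0} \<subseteq> A"
    and "f \<in> borel_measurable (sample_space A)" "g \<in> borel_measurable (sample_space A)"
  shows "(\<lambda>u. fst (init_est (sample_array u) k (f u) (g u))) \<in> borel_measurable (sample_space A)"
    and "(\<lambda>u. snd (init_est (sample_array u) k (f u) (g u))) \<in> borel_measurable (sample_space A)"
proof -
  have s: "(\<lambda>u. init_sample (sample_array u) k i) \<in> measurable (sample_space A) P" if "i < B" for i
    using init_sample_meas[OF assms(1) that assms(2)] by (simp add: sample_array_def)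
  show "(\<lambda>u. fst (init_est (sample_array u) k (f u) (g u))) \<in> borel_measurable (sample_space A)"
    unfolding init_est_def fst_conv
    by (intro borel_measurable_scaleR borel_measurable_const borel_measurable_sum
        measurable_compose_jointly[OF gx_meas assms(3,4)] s) auto
  show "(\<lambda>u. snd (init_est (sample_array u) k (f u) (g u))) \<in> borel_measurable (sample_space A)"
    unfolding init_est_def snd_conv
    by (intro borel_measurable_scaleR borel_measurable_const borel_measurable_sum
        measurable_compose_jointly[OF gy_meas assms(3,4)] s) auto
qed

lemma position_Suc_measurable:
  assumes "(\<lambda>u. x_seq (sample_array u) t) \<in> borel_measurable N" "(\<lambda>u. y_seq (sample_array u) t) \<in> borel_measurable N"
    "(\<lambda>u. z_seq (sample_array u) t) \<in> borel_measurable N" "(\<lambda>u. Gx_seq (sample_array u) t) \<in> borel_measurable N"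
    "(\<lambda>u. Gy_seq (sample_array u) t) \<in> borel_measurable N"
  shows "(\<lambda>u. x_seq (sample_array u) (Suc t)) \<in> borel_measurable N"
    and "(\<lambda>u. y_seq (sample_array u) (Suc t)) \<in> borel_measurable N"
    and "(\<lambda>u. z_seq (sample_array u) (Suc t)) \<in> borel_measurable N"
proof -
  have cp: "closest_point X \<in> borel_measurable borel" "closest_point Y \<in> borel_measurable borel"
    using X Y by (auto intro!: borel_measurable_continuous_onI continuous_on_closest_point)
  show x: "(\<lambda>u. x_seq (sample_array u) (Suc t)) \<in> borel_measurable N"
    unfolding state_Suc using measurable_compose[OF _ cp(1)] assms by measurable
  show "(\<lambda>u. y_seq (sample_array u) (Suc t)) \<in> borel_measurable N"
    unfolding state_Suc using measurable_compose[OF _ cp(2)] assms by measurable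
  show "(\<lambda>u. z_seq (sample_array u) (Suc t)) \<in> borel_measurable N"
    unfolding state_Suc(3)[of _ t] using x assms by measurable
qed

lemma state_measurable:
  assumes "t < K * T" and "drawn_before (Suc t) \<subseteq> A"
  shows "(\<lambda>u. x_seq (sample_array u) t) \<in> borel_measurable (sample_space A)
    \<and> (\<lambda>u. y_seq (sample_array u) t) \<in> borel_measurable (sample_space A)
    \<and> (\<lambda>u. z_seq (sample_array u) t) \<in> borel_measurable (sample_space A)
    \<and> (\<lambda>u. Gx_seq (sample_array u) t) \<in> borel_measurable (sample_space A)
    \<and> (\<lambda>u. Gy_seq (sample_array u) t) \<in> borel_measurable (sample_space A)"
  using assms
proof (induction t)
  case 0
  have "{j \<in> I. fst j = 0 \<and> fst (snd j) = 0} \<subseteq> A"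
    using 0(2) epoch_start_drawn_before[of _ 0] by auto
  then show ?case
    unfolding state_0 using K_pos by (auto intro!: init_est_measurable)
next
  case (Suc t)
  have IH: "(\<lambda>u. x_seq (sample_array u) t) \<in> borel_measurable (sample_space A)
    \<and> (\<lambda>u. y_seq (sample_array u) t) \<in> borel_measurable (sample_space A)
    \<and> (\<lambda>u. z_seq (sample_array u) t) \<in> borel_measurable (sample_space A)
    \<and> (\<lambda>u. Gx_seq (sample_array u) t) \<in> borel_measurable (sample_space A)
    \<and> (\<lambda>u. Gy_seq (sample_array u) t) \<in> borel_measurable (sample_space A)"
    using Suc.prems drawn_before_mono[of "Suc t" "Suc (Suc t)"] by (intro Suc.IH) auto
  note pos = position_Suc_measurable[of t "sample_space A"] IH
  have k: "Suc t div T < K"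
    using Suc.prems(1) by (intro epoch_index_less) simp
  have G: "(\<lambda>u. Gx_seq (sample_array u) (Suc t)) \<in> borel_measurable (sample_space A)
    \<and> (\<lambda>u. Gy_seq (sample_array u) (Suc t)) \<in> borel_measurable (sample_space A)"
  proof (cases "Suc t mod T = 0")
    case True
    have "{j \<in> I. fst j = Suc t div T \<and> fst (snd j) = 0} \<subseteq> A"
      using Suc.prems(2) epoch_start_drawn_before[of _ "Suc t"] by auto
    then show ?thesis
      unfolding state_Suc(4,5) using True IH pos by (auto intro!: init_est_measurable[OF k])
  next
    case False
    have c: "(\<lambda>u. sample_array u (Suc t div T) (Suc t mod T) i) \<in> measurable (sample_space A) P" if "i < M" for i
      unfolding sample_array_def
      using Suc.prems inner_sample_drawn_before[OF _ False that] by (intro measurable_component_singleton) auto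
    show ?thesis
      unfolding state_Suc(4,5) using False IH pos
      by (auto intro!: borel_measurable_add borel_measurable_scaleR borel_measurable_sum borel_measurable_diff
          measurable_compose_jointly[OF gx_meas] measurable_compose_jointly[OF gy_meas] c)
  qed
  show ?case
    using G pos by auto
qed

lemma position_measurable:
  assumes "t \<le> K * T" and "drawn_before t \<subseteq> A"
  shows "(\<lambda>u. x_seq (sample_array u) t) \<in> borel_measurable (sample_space A)"
    and "(\<lambda>u. y_seq (sample_array u) t) \<in> borel_measurable (sample_space A)"
    and "(\<lambda>u. z_seq (sample_array u) t) \<in> borel_measurable (sample_space A)"
proof (atomize (full), cases t)
  case (Suc t')
  with assms have "(\<lambda>u. x_seq (sample_array u) t') \<in> borel_measurable (sample_space A)
    \<and> (\<lambda>u. y_seq (sample_array u) t') \<in> borel_measurable (sample_space A)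
    \<and> (\<lambda>u. z_seq (sample_array u) t') \<in> borel_measurable (sample_space A)
    \<and> (\<lambda>u. Gx_seq (sample_array u) t') \<in> borel_measurable (sample_space A)
    \<and> (\<lambda>u. Gy_seq (sample_array u) t') \<in> borel_measurable (sample_space A)"
    by (intro state_measurable) auto
  then show "(\<lambda>u. x_seq (sample_array u) t) \<in> borel_measurable (sample_space A)
    \<and> (\<lambda>u. y_seq (sample_array u) t) \<in> borel_measurable (sample_space A)
    \<and> (\<lambda>u. z_seq (sample_array u) t) \<in> borel_measurable (sample_space A)"
    using position_Suc_measurable[of t' "sample_space A"] Suc by auto
qed (simp add: state_0)

lemma position_random_variable:
  assumes "t \<le> K * T"
  shows "(\<lambda>\<omega>. x_seq (\<xi> \<omega>) t) \<in> borel_measurable Q"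
    and "(\<lambda>\<omega>. y_seq (\<xi> \<omega>) t) \<in> borel_measurable Q"
    and "(\<lambda>\<omega>. z_seq (\<xi> \<omega>) t) \<in> borel_measurable Q"
  using measurable_compose[OF samples_on_measurable[OF drawn_before_subset] position_measurable(1)[OF assms order_refl]]
    measurable_compose[OF samples_on_measurable[OF drawn_before_subset] position_measurable(2)[OF assms order_refl]]
    measurable_compose[OF samples_on_measurable[OF drawn_before_subset] position_measurable(3)[OF assms order_refl]]
  by (simp_all add: position_local[OF assms order_refl])

lemma y_seq_square_integrable:
  assumes "t \<le> K * T"
  shows "square_integrable Q (\<lambda>\<omega>. y_seq (\<xi> \<omega>) t)"
proof -
  interpret Q: prob_space Q
    by (rule Q)
  obtain R where R: "\<And>y. y \<in> Y \<Longrightarrow> norm y \<le> R"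
    using Y(4) by (auto simp: bounded_iff)
  show ?thesis
  proof (rule square_integrable_bound[where h="\<lambda>_. R\<^sup>2"])
    show "(norm (y_seq (\<xi> \<omega>) t))\<^sup>2 \<le> R\<^sup>2" for \<omega>
      using R[OF y_seq_in] by (intro power_mono) auto
  qed (use position_random_variable(2)[OF assms] in auto)
qed

end


section \<open>Error of the SPIDER estimator\<close>

(* One coordinate (x or y) of the SPIDER estimator; C bounds the mean-square error of the estimator
   at the start of an epoch. *)

locale spider_component = spider_gda +
  fixes g :: "'a \<Rightarrow> 'b \<Rightarrow> 'c \<Rightarrow> 'v::euclidean_space"
    and G :: "(nat \<Rightarrow> nat \<Rightarrow> nat \<Rightarrow> 'c) \<Rightarrow> nat \<Rightarrow> 'v"
    and a b \<sigma> C :: real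
  assumes g_meas: "(\<lambda>(x, y, s). g x y s) \<in> borel_measurable (borel \<Otimes>\<^sub>M (borel \<Otimes>\<^sub>M P))"
    and g_sq: "\<And>x y. x \<in> X \<Longrightarrow> y \<in> Y \<Longrightarrow> integrable P (\<lambda>s. (norm (g x y s))\<^sup>2)"
    and g_diff: "\<And>x1 x2 y1 y2. x1 \<in> X \<Longrightarrow> x2 \<in> X \<Longrightarrow> y1 \<in> Y \<Longrightarrow> y2 \<in> Y \<Longrightarrow>
       (\<integral>s. (norm (g x1 y1 s - g x2 y2 s))\<^sup>2 \<partial>P) \<le> a * (norm (x1 - x2))\<^sup>2 + b * (norm (y1 - y2))\<^sup>2"
    and g_var: "\<And>x y. x \<in> X \<Longrightarrow> y \<in> Y \<Longrightarrow> (\<integral>s. (norm (g x y s - (\<integral>s. g x y s \<partial>P)))\<^sup>2 \<partial>P) \<le> \<sigma>\<^sup>2"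
    and coeffs_nonneg: "0 \<le> a" "0 \<le> b"
    and G_epoch_start: "\<And>xi k. G xi (k * T)
       = (1 / real B) *\<^sub>R (\<Sum>i<B. g (x_seq xi (k * T)) (y_seq xi (k * T)) (init_sample xi k i))"
    and G_Suc: "\<And>xi t. Suc t mod T \<noteq> 0 \<Longrightarrow> G xi (Suc t)
       = (1 / real M) *\<^sub>R (\<Sum>i<M. g (x_seq xi (Suc t)) (y_seq xi (Suc t)) (xi (Suc t div T) (Suc t mod T) i)
                                 - g (x_seq xi t) (y_seq xi t) (xi (Suc t div T) (Suc t mod T) i)) + G xi t"
    and G_measurable: "\<And>t. t < K * T \<Longrightarrow>
       (\<lambda>u. G (sample_array u) t) \<in> borel_measurable (sample_space (drawn_before (Suc t)))"
    and G_local: "\<And>t \<omega>. t < K * T \<Longrightarrow> G (sample_array (samples_on (drawn_before (Suc t)) \<omega>)) t = G (\<xi> \<omega>) t"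
    and component_setting:
      "(0 < B \<and> C = \<sigma>\<^sup>2 / real B \<and> (\<forall>xi k i. init_sample xi k i = xi k 0 i) \<and> (\<forall>k<K. \<forall>i<B. (k, 0, i) \<in> I))
       \<or> (C = 0 \<and> (\<forall>xi k x y. x \<in> X \<longrightarrow> y \<in> Y \<longrightarrow>
            (1 / real B) *\<^sub>R (\<Sum>i<B. g x y (init_sample xi k i)) = (\<integral>s. g x y s \<partial>P)))"
begin

definition "g_mean x y = (\<integral>s. g x y s \<partial>P)"

definition "est_err \<omega> t = (norm (G (\<xi> \<omega>) t - g_mean (x_seq (\<xi> \<omega>) t) (y_seq (\<xi> \<omega>) t)))\<^sup>2"

definition "drift \<omega> t = a * (norm (x_seq (\<xi> \<omega>) (Suc t) - x_seq (\<xi> \<omega>) t))\<^sup>2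
                        + b * (norm (y_seq (\<xi> \<omega>) (Suc t) - y_seq (\<xi> \<omega>) t))\<^sup>2"

lemma est_err_nonneg: "0 \<le> est_err \<omega> t" and drift_nonneg: "0 \<le> drift \<omega> t"
  using coeffs_nonneg by (simp_all add: est_err_def drift_def)

lemma g_mean_measurable:
  "f \<in> borel_measurable N \<Longrightarrow> h \<in> borel_measurable N \<Longrightarrow> (\<lambda>u. g_mean (f u) (h u)) \<in> borel_measurable N"
  unfolding g_mean_def by (rule measurable_integral_compose_jointly[OF P g_meas])

lemma g_measurable: "g x y \<in> borel_measurable P"
  using measurable_compose_jointly[OF g_meas, of "\<lambda>_. x" P "\<lambda>_. y" "\<lambda>s. s"] by simp

lemma g_integrable:
  assumes "x \<in> X" "y \<in> Y"
  shows "integrable P (g x y)"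
proof (rule integrable_if_square_integrable[OF prob_space.finite_measure[OF P]])
  show "square_integrable P (g x y)"
    using g_measurable g_sq[OF assms] unfolding square_integrable_def by simp
qed

lemma g_increment_sq_integrable:
  assumes "x1 \<in> X" "x2 \<in> X" "y1 \<in> Y" "y2 \<in> Y"
  shows "integrable P (\<lambda>s. (norm (g x1 y1 s - g x2 y2 s))\<^sup>2)"
  using square_integrable_diff[of P "g x1 y1" "g x2 y2"] g_measurable g_sq assms
  unfolding square_integrable_def by auto

lemma g_mean_diff:
  assumes "x1 \<in> X" "x2 \<in> X" "y1 \<in> Y" "y2 \<in> Y"
  shows "(\<integral>s. g x1 y1 s - g x2 y2 s \<partial>P) = g_mean x1 y1 - g_mean x2 y2"
  using g_integrable assms by (simp add: g_mean_def)

lemma g_mean_diff_sq_le: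
  assumes "x1 \<in> X" "x2 \<in> X" "y1 \<in> Y" "y2 \<in> Y"
  shows "(norm (g_mean x1 y1 - g_mean x2 y2))\<^sup>2 \<le> a * (norm (x1 - x2))\<^sup>2 + b * (norm (y1 - y2))\<^sup>2"
  using power2_norm_integral_le[OF P _ g_increment_sq_integrable[OF assms]] g_integrable assms g_diff[OF assms]
  by (simp add: g_mean_def)

lemma centered_sample:
  assumes "x \<in> X" "y \<in> Y"
  defines "D \<equiv> \<lambda>s. g x y s - g_mean x y"
  shows "integrable P D" "integrable P (\<lambda>s. (norm (D s))\<^sup>2)" "(\<integral>s. D s \<partial>P) = 0"
    "(\<integral>s. (norm (D s))\<^sup>2 \<partial>P) \<le> \<sigma>\<^sup>2"
proof -
  interpret prob_space P
    by (rule P)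
  show "integrable P D" "integrable P (\<lambda>s. (norm (D s))\<^sup>2)" "(\<integral>s. D s \<partial>P) = 0"
    "(\<integral>s. (norm (D s))\<^sup>2 \<partial>P) \<le> \<sigma>\<^sup>2"
    using g_integrable[OF assms(1-2)] integral_norm_centered_square(1)[OF P g_integrable[OF assms(1-2)] g_sq[OF assms(1-2)]]
      g_var[OF assms(1-2)] prob_space
    by (auto simp: D_def g_mean_def)
qed

lemma centered_increment:
  assumes "x1 \<in> X" "x2 \<in> X" "y1 \<in> Y" "y2 \<in> Y"
  defines "D \<equiv> \<lambda>s. (g x1 y1 s - g x2 y2 s) - (g_mean x1 y1 - g_mean x2 y2)"
  shows "integrable P D" "integrable P (\<lambda>s. (norm (D s))\<^sup>2)" "(\<integral>s. D s \<partial>P) = 0"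
    "(\<integral>s. (norm (D s))\<^sup>2 \<partial>P) \<le> a * (norm (x1 - x2))\<^sup>2 + b * (norm (y1 - y2))\<^sup>2"
proof -
  interpret prob_space P
    by (rule P)
  have int: "integrable P (\<lambda>s. g x1 y1 s - g x2 y2 s)"
    using g_integrable assms(1-4) by auto
  note sq = g_increment_sq_integrable[OF assms(1-4)]
  show "integrable P D" "integrable P (\<lambda>s. (norm (D s))\<^sup>2)"
    using int integral_norm_centered_square(1)[OF P int sq] by (simp_all add: D_def g_mean_diff[OF assms(1-4)])
  show "(\<integral>s. D s \<partial>P) = 0"
    using int prob_space by (simp add: D_def g_mean_diff[OF assms(1-4)])
  show "(\<integral>s. (norm (D s))\<^sup>2 \<partial>P) \<le> a * (norm (x1 - x2))\<^sup>2 + b * (norm (y1 - y2))\<^sup>2"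
    using integral_norm_centered_square_le[OF P int sq] g_diff[OF assms(1-4)] by (simp add: D_def g_mean_diff[OF assms(1-4)])
qed

definition "noise t u s = g (x_seq (sample_array u) t) (y_seq (sample_array u) t) s
                          - g_mean (x_seq (sample_array u) t) (y_seq (sample_array u) t)"

lemma noise_measurable:
  assumes "t \<le> K * T" and "drawn_before t \<subseteq> A"
  shows "(\<lambda>p. noise t (fst p) (snd p)) \<in> borel_measurable (sample_space A \<Otimes>\<^sub>M P)"
proof -
  have "(\<lambda>p. x_seq (sample_array (fst p)) t) \<in> borel_measurable (sample_space A \<Otimes>\<^sub>M P)"
    "(\<lambda>p. y_seq (sample_array (fst p)) t) \<in> borel_measurable (sample_space A \<Otimes>\<^sub>M P)"
    by (rule measurable_compose[OF measurable_fst position_measurable(1)[OF assms]],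
        rule measurable_compose[OF measurable_fst position_measurable(2)[OF assms]])
  then show ?thesis
    unfolding noise_def
    by (intro borel_measurable_diff measurable_compose_jointly[OF g_meas] g_mean_measurable measurable_snd)
qed

lemma noise_local:
  assumes "t \<le> K * T" and "drawn_before t \<subseteq> A"
  shows "noise t (samples_on A \<omega>) s = g (x_seq (\<xi> \<omega>) t) (y_seq (\<xi> \<omega>) t) s - g_mean (x_seq (\<xi> \<omega>) t) (y_seq (\<xi> \<omega>) t)"
  using position_local(1,2)[OF assms] by (simp add: noise_def)

lemma noise_centered:
  shows "integrable P (noise t u)" "integrable P (\<lambda>s. (norm (noise t u s))\<^sup>2)" "(\<integral>s. noise t u s \<partial>P) = 0"
    "(\<integral>s. (norm (noise t u s))\<^sup>2 \<partial>P) \<le> \<sigma>\<^sup>2"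
  using centered_sample[OF x_seq_in y_seq_in] by (simp_all add: noise_def[abs_def])

lemma noise_increment_centered:
  shows "integrable P (\<lambda>s. noise (Suc t) u s - noise t u s)"
    "integrable P (\<lambda>s. (norm (noise (Suc t) u s - noise t u s))\<^sup>2)"
    "(\<integral>s. noise (Suc t) u s - noise t u s \<partial>P) = 0"
    "(\<integral>s. (norm (noise (Suc t) u s - noise t u s))\<^sup>2 \<partial>P)
       \<le> a * (norm (x_seq (sample_array u) (Suc t) - x_seq (sample_array u) t))\<^sup>2
         + b * (norm (y_seq (sample_array u) (Suc t) - y_seq (sample_array u) t))\<^sup>2"
proof -
  let ?x = "x_seq (sample_array u)" and ?y = "y_seq (sample_array u)"
  have eq: "noise (Suc t) u s - noise t u s
      = (g (?x (Suc t)) (?y (Suc t)) s - g (?x t) (?y t) s) - (g_mean (?x (Suc t)) (?y (Suc t)) - g_mean (?x t) (?y t))"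
    for s by (simp add: noise_def algebra_simps)
  show "integrable P (\<lambda>s. noise (Suc t) u s - noise t u s)"
    "integrable P (\<lambda>s. (norm (noise (Suc t) u s - noise t u s))\<^sup>2)"
    "(\<integral>s. noise (Suc t) u s - noise t u s \<partial>P) = 0"
    "(\<integral>s. (norm (noise (Suc t) u s - noise t u s))\<^sup>2 \<partial>P)
       \<le> a * (norm (?x (Suc t) - ?x t))\<^sup>2 + b * (norm (?y (Suc t) - ?y t))\<^sup>2"
    unfolding eq using centered_increment[OF x_seq_in[of "sample_array u" "Suc t"] x_seq_in[of "sample_array u" t]
        y_seq_in[of "sample_array u" "Suc t"] y_seq_in[of "sample_array u" t]] by simp_all
qed

lemma G_error_Suc:
  assumes "Suc t mod T \<noteq> 0"
  shows "G xi (Suc t) - g_mean (x_seq xi (Suc t)) (y_seq xi (Suc t))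
    = (G xi t - g_mean (x_seq xi t) (y_seq xi t)) + (1 / real M) *\<^sub>R (\<Sum>i<M.
        (g (x_seq xi (Suc t)) (y_seq xi (Suc t)) (xi (Suc t div T) (Suc t mod T) i)
          - g_mean (x_seq xi (Suc t)) (y_seq xi (Suc t)))
        - (g (x_seq xi t) (y_seq xi t) (xi (Suc t div T) (Suc t mod T) i) - g_mean (x_seq xi t) (y_seq xi t)))"
  unfolding G_Suc[OF assms] by (rule scaleR_mean_centered_increments[OF M_pos, symmetric])

lemma G_error_epoch_start:
  assumes "0 < B" and "\<And>xi k i. init_sample xi k i = xi k 0 i"
  shows "G xi (k * T) - g_mean (x_seq xi (k * T)) (y_seq xi (k * T))
    = (1 / real B) *\<^sub>R (\<Sum>i<B. g (x_seq xi (k * T)) (y_seq xi (k * T)) (xi k 0 i)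
                                - g_mean (x_seq xi (k * T)) (y_seq xi (k * T)))"
proof -
  have "(1 / real B) *\<^sub>R (\<Sum>i<B. h i - m) = (1 / real B) *\<^sub>R (\<Sum>i<B. h i) - m" for h :: "nat \<Rightarrow> 'v" and m
    using assms(1) by (simp add: sum_subtractf scaleR_diff_right sum_constant_scaleR)
  then show ?thesis
    by (simp add: G_epoch_start assms(2))
qed

lemma est_err_step_nn:
  assumes t1: "Suc t < K * T" and nz: "Suc t mod T \<noteq> 0"
  shows "(\<integral>\<^sup>+\<omega>. ennreal (est_err \<omega> (Suc t)) \<partial>Q)
       \<le> (\<integral>\<^sup>+\<omega>. ennreal (est_err \<omega> t + (1 / real M) * drift \<omega> t) \<partial>Q)"
proof -
  have t: "t < K * T"
    using t1 by simp
  define A where "A = drawn_before (Suc t)"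
  define k where "k = Suc t div T"
  define \<tau> where "\<tau> = Suc t mod T"
  define c where "c u = G (sample_array u) t - g_mean (x_seq (sample_array u) t) (y_seq (sample_array u) t)" for u
  define D where "D u s = noise (Suc t) u s - noise t u s" for u s
  define bnd where "bnd u = a * (norm (x_seq (sample_array u) (Suc t) - x_seq (sample_array u) t))\<^sup>2
    + b * (norm (y_seq (sample_array u) (Suc t) - y_seq (sample_array u) t))\<^sup>2" for u
  have A: "drawn_before t \<subseteq> A" "drawn_before (Suc t) \<subseteq> A"
    using drawn_before_mono[of t "Suc t"] by (auto simp: A_def)
  have new_I: "(k, \<tau>, i) \<in> I" if "i < M" for i
    using inner_sample_drawn_before[OF t1 nz that] drawn_before_subset by (auto simp: k_def \<tau>_def)
  have new_A: "(k, \<tau>, i) \<notin> A" for i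
    by (simp add: A_def drawn_before_def k_def \<tau>_def)
  have pos: "(\<lambda>u. x_seq (sample_array u) t) \<in> borel_measurable (sample_space A)"
    "(\<lambda>u. y_seq (sample_array u) t) \<in> borel_measurable (sample_space A)"
    "(\<lambda>u. x_seq (sample_array u) (Suc t)) \<in> borel_measurable (sample_space A)"
    "(\<lambda>u. y_seq (sample_array u) (Suc t)) \<in> borel_measurable (sample_space A)"
    using position_measurable(1,2)[OF _ A(1)] position_measurable(1,2)[OF _ A(2)] t1 by auto
  have "(\<lambda>u. G (sample_array u) t) \<in> borel_measurable (sample_space A)"
    using G_measurable[OF t] by (simp add: A_def)
  then have cm: "c \<in> borel_measurable (sample_space A)"
    unfolding c_def[abs_def] using g_mean_measurable[OF pos(1,2)] by (rule borel_measurable_diff)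
  have Dm: "(\<lambda>p. D (fst p) (snd p)) \<in> borel_measurable (sample_space A \<Otimes>\<^sub>M P)"
    unfolding D_def using noise_measurable[OF _ A(1)] noise_measurable[OF _ A(2)] t1 by auto
  have bm: "bnd \<in> borel_measurable (sample_space A)"
    unfolding bnd_def[abs_def] using pos by measurable
  have D_props: "integrable P (D u)" "integrable P (\<lambda>s. (norm (D u s))\<^sup>2)" "(\<integral>s. D u s \<partial>P) = 0"
    "(\<integral>s. (norm (D u s))\<^sup>2 \<partial>P) \<le> bnd u" for u
    using noise_increment_centered[of t u] by (simp_all add: D_def[abs_def] bnd_def)
  have "(\<integral>\<^sup>+\<omega>. ennreal (est_err \<omega> (Suc t)) \<partial>Q)
      = (\<integral>\<^sup>+\<omega>. ennreal ((norm (c (samples_on A \<omega>)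
          + (1 / real M) *\<^sub>R (\<Sum>i<M. D (samples_on A \<omega>) (sample (k, \<tau>, i) \<omega>))))\<^sup>2) \<partial>Q)"
    using t1 A position_local(1,2)[OF _ A(1)] G_local[OF t]
    by (intro nn_integral_cong) (simp add: est_err_def c_def D_def noise_local G_error_Suc[OF nz] k_def \<tau>_def A_def)
  also have "\<dots> \<le> (\<integral>\<^sup>+\<omega>. ennreal ((norm (c (samples_on A \<omega>)))\<^sup>2
      + (1 / real M)\<^sup>2 * real M * bnd (samples_on A \<omega>)) \<partial>Q)"
    using nn_integral_norm_add_indep_centered_sum_le[OF Q P indep_sample drawn_before_subset[of "Suc t", folded A_def]
        new_I new_A _ sample_distr[OF new_I] cm Dm bm D_props]
    by (auto simp: inj_def samples_on_def)
  also have "\<dots> = (\<integral>\<^sup>+\<omega>. ennreal (est_err \<omega> t + (1 / real M) * drift \<omega> t) \<partial>Q)"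
    using M_pos t1 position_local(1,2)[OF _ A(1)] position_local(1,2)[OF _ A(2)] G_local[OF t]
    by (intro nn_integral_cong) (simp add: c_def est_err_def drift_def bnd_def power2_eq_square A_def)
  finally show ?thesis .
qed

lemma G_random_variable:
  assumes "t < K * T"
  shows "(\<lambda>\<omega>. G (\<xi> \<omega>) t) \<in> borel_measurable Q"
proof -
  have "(\<lambda>\<omega>. G (sample_array (samples_on (drawn_before (Suc t)) \<omega>)) t) \<in> borel_measurable Q"
    by (rule measurable_compose[OF samples_on_measurable[OF drawn_before_subset] G_measurable[OF assms]])
  then show ?thesis
    by (simp add: G_local[OF assms])
qed

lemma g_mean_random_variable:
  assumes "t \<le> K * T"
  shows "(\<lambda>\<omega>. g_mean (x_seq (\<xi> \<omega>) t) (y_seq (\<xi> \<omega>) t)) \<in> borel_measurable Q"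
  using position_random_variable(1,2)[OF assms] by (rule g_mean_measurable)

lemma est_err_random_variable:
  assumes "t < K * T"
  shows "(\<lambda>\<omega>. est_err \<omega> t) \<in> borel_measurable Q"
proof -
  have "(\<lambda>\<omega>. g_mean (x_seq (\<xi> \<omega>) t) (y_seq (\<xi> \<omega>) t)) \<in> borel_measurable Q"
    using assms by (intro g_mean_random_variable) simp
  with G_random_variable[OF assms] show ?thesis
    unfolding est_err_def by measurable
qed

lemma g_mean_square_integrable:
  assumes "t \<le> K * T" and "square_integrable Q (\<lambda>\<omega>. x_seq (\<xi> \<omega>) t)"
  shows "square_integrable Q (\<lambda>\<omega>. g_mean (x_seq (\<xi> \<omega>) t) (y_seq (\<xi> \<omega>) t))"
proof -
  interpret Q: prob_space Q
    by (rule Q)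
  let ?x = "\<lambda>\<omega>. x_seq (\<xi> \<omega>) t" and ?y = "\<lambda>\<omega>. y_seq (\<xi> \<omega>) t"
  have "square_integrable Q (\<lambda>\<omega>. ?x \<omega> - x0)" "square_integrable Q (\<lambda>\<omega>. ?y \<omega> - y0)"
    using assms Q.finite_measure_axioms
    by (auto intro!: square_integrable_diff square_integrable_const y_seq_square_integrable)
  then have "integrable Q (\<lambda>\<omega>. 2 * (norm (g_mean x0 y0))\<^sup>2 + 2 * (a * (norm (?x \<omega> - x0))\<^sup>2 + b * (norm (?y \<omega> - y0))\<^sup>2))"
    unfolding square_integrable_def by auto
  then show ?thesis
  proof (rule square_integrable_bound[OF g_mean_random_variable[OF assms(1)]])
    fix \<omega>
    have "(norm (g_mean (?x \<omega>) (?y \<omega>)))\<^sup>2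
        \<le> 2 * ((norm (g_mean x0 y0))\<^sup>2 + (norm (g_mean (?x \<omega>) (?y \<omega>) - g_mean x0 y0))\<^sup>2)"
      using power2_norm_add_le[of "g_mean x0 y0" "g_mean (?x \<omega>) (?y \<omega>) - g_mean x0 y0"] by simp
    also have "\<dots> \<le> 2 * ((norm (g_mean x0 y0))\<^sup>2 + (a * (norm (?x \<omega> - x0))\<^sup>2 + b * (norm (?y \<omega> - y0))\<^sup>2))"
      using g_mean_diff_sq_le[OF x_seq_in start(1) y_seq_in start(2)] by (intro mult_left_mono add_left_mono) auto
    finally show "(norm (g_mean (?x \<omega>) (?y \<omega>)))\<^sup>2
        \<le> 2 * (norm (g_mean x0 y0))\<^sup>2 + 2 * (a * (norm (?x \<omega> - x0))\<^sup>2 + b * (norm (?y \<omega> - y0))\<^sup>2)"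
      by simp
  qed
qed

lemma G_square_integrable:
  assumes "t < K * T" and "square_integrable Q (\<lambda>\<omega>. x_seq (\<xi> \<omega>) t)" and "integrable Q (\<lambda>\<omega>. est_err \<omega> t)"
  shows "square_integrable Q (\<lambda>\<omega>. G (\<xi> \<omega>) t)"
proof -
  have "square_integrable Q (\<lambda>\<omega>. G (\<xi> \<omega>) t - g_mean (x_seq (\<xi> \<omega>) t) (y_seq (\<xi> \<omega>) t))"
    using G_random_variable[OF assms(1)] g_mean_random_variable[of t] assms
    unfolding square_integrable_def est_err_def by simp
  moreover have "square_integrable Q (\<lambda>\<omega>. g_mean (x_seq (\<xi> \<omega>) t) (y_seq (\<xi> \<omega>) t))"
    using assms by (intro g_mean_square_integrable) auto
  ultimately show ?thesis
    using square_integrable_add by fastforce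
qed

lemma est_err_step:
  assumes "Suc t < K * T" and "Suc t mod T \<noteq> 0"
    and "integrable Q (\<lambda>\<omega>. est_err \<omega> t)" and "integrable Q (\<lambda>\<omega>. drift \<omega> t)"
  shows "integrable Q (\<lambda>\<omega>. est_err \<omega> (Suc t))"
    and "(\<integral>\<omega>. est_err \<omega> (Suc t) \<partial>Q) \<le> (\<integral>\<omega>. est_err \<omega> t \<partial>Q) + (1 / real M) * (\<integral>\<omega>. drift \<omega> t \<partial>Q)"
proof -
  have "(\<integral>\<^sup>+\<omega>. ennreal (est_err \<omega> t + (1 / real M) * drift \<omega> t) \<partial>Q)
      = ennreal ((\<integral>\<omega>. est_err \<omega> t \<partial>Q) + (1 / real M) * (\<integral>\<omega>. drift \<omega> t \<partial>Q))"
    using assms(3,4) est_err_nonneg drift_nonneg by (subst nn_integral_eq_integral) auto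
  moreover have "0 \<le> (\<integral>\<omega>. est_err \<omega> t \<partial>Q) + (1 / real M) * (\<integral>\<omega>. drift \<omega> t \<partial>Q)"
    using est_err_nonneg drift_nonneg by (intro add_nonneg_nonneg mult_nonneg_nonneg integral_nonneg_AE) auto
  ultimately show "integrable Q (\<lambda>\<omega>. est_err \<omega> (Suc t))"
    and "(\<integral>\<omega>. est_err \<omega> (Suc t) \<partial>Q) \<le> (\<integral>\<omega>. est_err \<omega> t \<partial>Q) + (1 / real M) * (\<integral>\<omega>. drift \<omega> t \<partial>Q)"
    using integral_le_if_nn_integral_le[OF est_err_random_variable[OF assms(1)] est_err_nonneg]
      est_err_step_nn[OF assms(1,2)]
    by auto
qed

lemma est_err_epoch_start_nn:
  assumes k: "k < K" and B_pos: "0 < B" and sampled: "\<And>xi k i. init_sample xi k i = xi k 0 i"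
    and start_I: "\<And>i. i < B \<Longrightarrow> (k, 0, i) \<in> I"
  shows "(\<integral>\<^sup>+\<omega>. ennreal (est_err \<omega> (k * T)) \<partial>Q) \<le> ennreal (\<sigma>\<^sup>2 / real B)"
proof -
  interpret Q: prob_space Q
    by (rule Q)
  define A where "A = drawn_before (k * T)"
  have t: "k * T \<le> K * T" and A: "drawn_before (k * T) \<subseteq> A"
    using k by (simp_all add: A_def)
  have new_A: "(k, 0, i) \<notin> A" for i
    by (simp add: A_def drawn_before_def)
  have "(\<integral>\<^sup>+\<omega>. ennreal (est_err \<omega> (k * T)) \<partial>Q)
      = (\<integral>\<^sup>+\<omega>. ennreal ((norm ((\<lambda>_. 0::'v) (samples_on A \<omega>)
          + (1 / real B) *\<^sub>R (\<Sum>i<B. noise (k * T) (samples_on A \<omega>) (sample (k, 0, i) \<omega>))))\<^sup>2) \<partial>Q)"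
    by (intro nn_integral_cong) (simp add: est_err_def noise_local[OF t A] G_error_epoch_start[OF B_pos sampled])
  also have "\<dots> \<le> (\<integral>\<^sup>+\<omega>. ennreal ((norm ((\<lambda>_. 0::'v) (samples_on A \<omega>)))\<^sup>2
      + (1 / real B)\<^sup>2 * real B * (\<lambda>_. \<sigma>\<^sup>2) (samples_on A \<omega>)) \<partial>Q)"
    using nn_integral_norm_add_indep_centered_sum_le[where idx="\<lambda>i. (k, 0, i)" and n=B and c="1 / real B"
        and a="\<lambda>_. 0" and bnd="\<lambda>_. \<sigma>\<^sup>2",
        OF Q P indep_sample drawn_before_subset[of "k * T", folded A_def] start_I new_A _ sample_distr[OF start_I]
        _ noise_measurable[OF t A] _ noise_centered]
    by (auto simp: inj_def samples_on_def restrict_def)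
  also have "\<dots> = ennreal (\<sigma>\<^sup>2 / real B)"
    using B_pos by (simp add: power2_eq_square Q.emeasure_space_1)
  finally show ?thesis .
qed

lemma est_err_epoch_start:
  assumes k: "k < K"
  shows "integrable Q (\<lambda>\<omega>. est_err \<omega> (k * T))" and "(\<integral>\<omega>. est_err \<omega> (k * T) \<partial>Q) \<le> C"
proof (atomize (full), rule disjE[OF component_setting])
  assume online: "0 < B \<and> C = \<sigma>\<^sup>2 / real B \<and> (\<forall>xi k i. init_sample xi k i = xi k 0 i) \<and> (\<forall>k<K. \<forall>i<B. (k, 0, i) \<in> I)"
  have "k * T < K * T"
    using k T_pos by simp
  with online show "integrable Q (\<lambda>\<omega>. est_err \<omega> (k * T)) \<and> (\<integral>\<omega>. est_err \<omega> (k * T) \<partial>Q) \<le> C"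
    using integral_le_if_nn_integral_le[OF est_err_random_variable est_err_nonneg est_err_epoch_start_nn[OF k]]
    by auto
next
  assume exact: "C = 0 \<and> (\<forall>xi k x y. x \<in> X \<longrightarrow> y \<in> Y \<longrightarrow>
            (1 / real B) *\<^sub>R (\<Sum>i<B. g x y (init_sample xi k i)) = (\<integral>s. g x y s \<partial>P))"
  then have "est_err \<omega> (k * T) = 0" for \<omega>
    by (simp add: est_err_def G_epoch_start g_mean_def x_seq_in y_seq_in)
  with exact show "integrable Q (\<lambda>\<omega>. est_err \<omega> (k * T)) \<and> (\<integral>\<omega>. est_err \<omega> (k * T) \<partial>Q) \<le> C"
    by simp
qed

lemma drift_integrable:
  assumes "Suc t \<le> K * T"
    and "square_integrable Q (\<lambda>\<omega>. x_seq (\<xi> \<omega>) t)" "square_integrable Q (\<lambda>\<omega>. x_seq (\<xi> \<omega>) (Suc t))"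
  shows "integrable Q (\<lambda>\<omega>. drift \<omega> t)"
proof -
  have "square_integrable Q (\<lambda>\<omega>. x_seq (\<xi> \<omega>) (Suc t) - x_seq (\<xi> \<omega>) t)"
    "square_integrable Q (\<lambda>\<omega>. y_seq (\<xi> \<omega>) (Suc t) - y_seq (\<xi> \<omega>) t)"
    using assms by (auto intro!: square_integrable_diff y_seq_square_integrable)
  then show ?thesis
    unfolding drift_def square_integrable_def by auto
qed

lemma est_err_Suc_integrable:
  assumes t: "Suc t < K * T"
    and "square_integrable Q (\<lambda>\<omega>. x_seq (\<xi> \<omega>) t)" "square_integrable Q (\<lambda>\<omega>. x_seq (\<xi> \<omega>) (Suc t))"
    and err: "integrable Q (\<lambda>\<omega>. est_err \<omega> t)"
  shows "integrable Q (\<lambda>\<omega>. est_err \<omega> (Suc t))"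
proof (cases "Suc t mod T = 0")
  case True
  then have "Suc t div T * T = Suc t"
    using div_mult_mod_eq[of "Suc t" T] by simp
  with est_err_epoch_start(1)[OF epoch_index_less[OF t]] show ?thesis
    by simp
next
  case False
  with assms show ?thesis
    by (intro est_err_step(1) drift_integrable) auto
qed

lemma est_err_within_epoch:
  assumes k: "k < K" and "\<tau> < T"
    and integrable: "\<And>t. t < K * T \<Longrightarrow> integrable Q (\<lambda>\<omega>. est_err \<omega> t) \<and> integrable Q (\<lambda>\<omega>. drift \<omega> t)"
  shows "(\<integral>\<omega>. est_err \<omega> (k * T + \<tau>) \<partial>Q) \<le> C + (1 / real M) * (\<Sum>s<\<tau>. \<integral>\<omega>. drift \<omega> (k * T + s) \<partial>Q)"
  using \<open>\<tau> < T\<close>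
proof (induction \<tau>)
  case 0
  then show ?case
    using est_err_epoch_start(2)[OF k] by simp
next
  case (Suc \<tau>)
  have "k * T + T \<le> K * T"
    using k by (metis add.commute less_eq_Suc_le mult_Suc mult_le_mono1)
  then have t: "Suc (k * T + \<tau>) < K * T"
    using Suc.prems by simp
  have "Suc (k * T + \<tau>) mod T \<noteq> 0"
    using Suc.prems by (simp add: mod_Suc)
  then have "(\<integral>\<omega>. est_err \<omega> (k * T + Suc \<tau>) \<partial>Q)
      \<le> (\<integral>\<omega>. est_err \<omega> (k * T + \<tau>) \<partial>Q) + (1 / real M) * (\<integral>\<omega>. drift \<omega> (k * T + \<tau>) \<partial>Q)"
    using est_err_step(2)[OF t] integrable[of "k * T + \<tau>"] t by simp
  also have "\<dots> \<le> C + (1 / real M) * (\<Sum>s<Suc \<tau>. \<integral>\<omega>. drift \<omega> (k * T + s) \<partial>Q)"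
    using Suc by (simp add: algebra_simps)
  finally show ?case .
qed

lemma est_err_epoch_sum:
  assumes k: "k < K"
    and integrable: "\<And>t. t < K * T \<Longrightarrow> integrable Q (\<lambda>\<omega>. est_err \<omega> t) \<and> integrable Q (\<lambda>\<omega>. drift \<omega> t)"
  shows "(\<Sum>\<tau><T. \<integral>\<omega>. est_err \<omega> (k * T + \<tau>) \<partial>Q) \<le> real T * C + (\<Sum>s<T. \<integral>\<omega>. drift \<omega> (k * T + s) \<partial>Q)"
proof -
  have "(\<Sum>\<tau><T. \<integral>\<omega>. est_err \<omega> (k * T + \<tau>) \<partial>Q)
      \<le> (\<Sum>\<tau><T. C + (1 / real M) * (\<Sum>s<\<tau>. \<integral>\<omega>. drift \<omega> (k * T + s) \<partial>Q))"
    using est_err_within_epoch[OF k _ integrable] by (intro sum_mono) auto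
  also have "\<dots> \<le> (\<Sum>\<tau><T. C + (1 / real M) * (\<Sum>s<T. \<integral>\<omega>. drift \<omega> (k * T + s) \<partial>Q))"
    using drift_nonneg by (intro sum_mono add_left_mono mult_left_mono sum_mono2 integral_nonneg_AE) auto
  also have "\<dots> = real T * C + (\<Sum>s<T. \<integral>\<omega>. drift \<omega> (k * T + s) \<partial>Q)"
    using T_pos by (simp add: M_eq_T distrib_left)
  finally show ?thesis .
qed

end

sublocale spider_gda \<subseteq> x: spider_component X Y P Q gx gy Fx Fy Lx Ly \<sigma>x \<sigma>y ax ay \<beta> r K T M x0 z0 y0
  Cx Cy B \<xi> I init_sample gx Gx_seq "2 * Lx\<^sup>2" "2 * Ly\<^sup>2" \<sigma>x Cx
proof unfold_locales
  show "(\<integral>s. (norm (gx x1 y1 s - gx x2 y2 s))\<^sup>2 \<partial>P) \<le> 2 * Lx\<^sup>2 * (norm (x1 - x2))\<^sup>2 + 2 * Ly\<^sup>2 * (norm (y1 - y2))\<^sup>2"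
    if "x1 \<in> X" "x2 \<in> X" "y1 \<in> Y" "y2 \<in> Y" for x1 x2 y1 y2
    using gx_increment_sq_le[OF that] .
  show "(\<integral>s. (norm (gx x y s - (\<integral>s. gx x y s \<partial>P)))\<^sup>2 \<partial>P) \<le> \<sigma>x\<^sup>2" if "x \<in> X" "y \<in> Y" for x y
    using var_x[OF that] unbiased_x[OF that] by simp
  show "Gx_seq xi (k * T) = (1 / real B) *\<^sub>R (\<Sum>i<B. gx (x_seq xi (k * T)) (y_seq xi (k * T)) (init_sample xi k i))"
    for xi k
    by (simp add: state_epoch_start init_est_def)
  show "Gx_seq xi (Suc t) = (1 / real M) *\<^sub>R (\<Sum>i<M. gx (x_seq xi (Suc t)) (y_seq xi (Suc t)) (xi (Suc t div T) (Suc t mod T) i)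
      - gx (x_seq xi t) (y_seq xi t) (xi (Suc t div T) (Suc t mod T) i)) + Gx_seq xi t"
    if "Suc t mod T \<noteq> 0" for xi t
    using that by (simp add: state_Suc)
  show "(\<lambda>u. Gx_seq (sample_array u) t) \<in> borel_measurable (sample_space (drawn_before (Suc t)))"
    if "t < K * T" for t
    using state_measurable[OF that order_refl] by auto
  show "Gx_seq (sample_array (samples_on (drawn_before (Suc t)) \<omega>)) t = Gx_seq (\<xi> \<omega>) t"
    if "t < K * T" for t \<omega>
    using state_local[OF that order_refl] by (simp add: Gx_seq_def)
  show "(0 < B \<and> Cx = \<sigma>x\<^sup>2 / real B \<and> (\<forall>xi k i. init_sample xi k i = xi k 0 i) \<and> (\<forall>k<K. \<forall>i<B. (k, 0, i) \<in> I))
    \<or> (Cx = 0 \<and> (\<forall>xi k x y. x \<in> X \<longrightarrow> y \<in> Y \<longrightarrow>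
         (1 / real B) *\<^sub>R (\<Sum>i<B. gx x y (init_sample xi k i)) = (\<integral>s. gx x y s \<partial>P)))"
    using setting unbiased_x by auto
qed (use gx_meas gx_sq in auto)

sublocale spider_gda \<subseteq> y: spider_component X Y P Q gx gy Fx Fy Lx Ly \<sigma>x \<sigma>y ax ay \<beta> r K T M x0 z0 y0
  Cx Cy B \<xi> I init_sample gy Gy_seq "Ly\<^sup>2" "Ly\<^sup>2" \<sigma>y Cy
proof unfold_locales
  show "(\<integral>s. (norm (gy x1 y1 s - gy x2 y2 s))\<^sup>2 \<partial>P) \<le> Ly\<^sup>2 * (norm (x1 - x2))\<^sup>2 + Ly\<^sup>2 * (norm (y1 - y2))\<^sup>2"
    if "x1 \<in> X" "x2 \<in> X" "y1 \<in> Y" "y2 \<in> Y" for x1 x2 y1 y2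
    using Ly[OF that] by (simp add: algebra_simps)
  show "(\<integral>s. (norm (gy x y s - (\<integral>s. gy x y s \<partial>P)))\<^sup>2 \<partial>P) \<le> \<sigma>y\<^sup>2" if "x \<in> X" "y \<in> Y" for x y
    using var_y[OF that] unbiased_y[OF that] by simp
  show "Gy_seq xi (k * T) = (1 / real B) *\<^sub>R (\<Sum>i<B. gy (x_seq xi (k * T)) (y_seq xi (k * T)) (init_sample xi k i))"
    for xi k
    by (simp add: state_epoch_start init_est_def)
  show "Gy_seq xi (Suc t) = (1 / real M) *\<^sub>R (\<Sum>i<M. gy (x_seq xi (Suc t)) (y_seq xi (Suc t)) (xi (Suc t div T) (Suc t mod T) i)
      - gy (x_seq xi t) (y_seq xi t) (xi (Suc t div T) (Suc t mod T) i)) + Gy_seq xi t"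
    if "Suc t mod T \<noteq> 0" for xi t
    using that by (simp add: state_Suc)
  show "(\<lambda>u. Gy_seq (sample_array u) t) \<in> borel_measurable (sample_space (drawn_before (Suc t)))"
    if "t < K * T" for t
    using state_measurable[OF that order_refl] by auto
  show "Gy_seq (sample_array (samples_on (drawn_before (Suc t)) \<omega>)) t = Gy_seq (\<xi> \<omega>) t"
    if "t < K * T" for t \<omega>
    using state_local[OF that order_refl] by (simp add: Gy_seq_def)
  show "(0 < B \<and> Cy = \<sigma>y\<^sup>2 / real B \<and> (\<forall>xi k i. init_sample xi k i = xi k 0 i) \<and> (\<forall>k<K. \<forall>i<B. (k, 0, i) \<in> I))
    \<or> (Cy = 0 \<and> (\<forall>xi k x y. x \<in> X \<longrightarrow> y \<in> Y \<longrightarrow>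
         (1 / real B) *\<^sub>R (\<Sum>i<B. gy x y (init_sample xi k i)) = (\<integral>s. gy x y s \<partial>P)))"
    using setting unbiased_y by auto
qed (use gy_meas gy_sq in auto)

section \<open>The stationarity bound\<close>

context spider_gda
begin

lemma x_seq_Suc_square_integrable:
  assumes "t < K * T" and x: "square_integrable Q (\<lambda>\<omega>. x_seq (\<xi> \<omega>) t)"
    and z: "square_integrable Q (\<lambda>\<omega>. z_seq (\<xi> \<omega>) t)" and G: "square_integrable Q (\<lambda>\<omega>. Gx_seq (\<xi> \<omega>) t)"
  shows "square_integrable Q (\<lambda>\<omega>. x_seq (\<xi> \<omega>) (Suc t))"
proof -
  interpret Q: prob_space Q
    by (rule Q)
  define p where "p \<omega> = x_seq (\<xi> \<omega>) t - ax *\<^sub>R (Gx_seq (\<xi> \<omega>) t + r *\<^sub>R (x_seq (\<xi> \<omega>) t - z_seq (\<xi> \<omega>) t))" for \<omega>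
  have "square_integrable Q (\<lambda>\<omega>. p \<omega> - x0)"
    unfolding p_def using x z G Q.finite_measure_axioms
    by (intro square_integrable_diff square_integrable_add square_integrable_scaleR square_integrable_const)
  then have "integrable Q (\<lambda>\<omega>. 2 * ((norm x0)\<^sup>2 + (norm (p \<omega> - x0))\<^sup>2))"
    unfolding square_integrable_def by auto
  moreover have "(\<lambda>\<omega>. x_seq (\<xi> \<omega>) (Suc t)) \<in> borel_measurable Q"
    using assms(1) by (intro position_random_variable(1)) simp
  ultimately show ?thesis
  proof (intro square_integrable_bound)
    fix \<omega>
    have "norm (x_seq (\<xi> \<omega>) (Suc t) - x0) \<le> norm (p \<omega> - x0)"
      using closest_point_lipschitz[OF X(3) X(2) X(1), of "p \<omega>" x0] closest_point_self[OF start(1)]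
      by (simp add: state_Suc(1) p_def dist_norm)
    then have "norm (x_seq (\<xi> \<omega>) (Suc t)) \<le> norm x0 + norm (p \<omega> - x0)"
      using norm_triangle_ineq[of x0 "x_seq (\<xi> \<omega>) (Suc t) - x0"] by simp
    then have "(norm (x_seq (\<xi> \<omega>) (Suc t)))\<^sup>2 \<le> (norm x0 + norm (p \<omega> - x0))\<^sup>2"
      by (intro power_mono) auto
    also have "\<dots> \<le> 2 * ((norm x0)\<^sup>2 + (norm (p \<omega> - x0))\<^sup>2)"
      using power2_norm_add_le[of "norm x0" "norm (p \<omega> - x0)"] by simp
    finally show "(norm (x_seq (\<xi> \<omega>) (Suc t)))\<^sup>2 \<le> 2 * ((norm x0)\<^sup>2 + (norm (p \<omega> - x0))\<^sup>2)" .
  qed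
qed

lemma iterates_integrable:
  assumes "t \<le> K * T"
  shows "square_integrable Q (\<lambda>\<omega>. x_seq (\<xi> \<omega>) t) \<and> square_integrable Q (\<lambda>\<omega>. z_seq (\<xi> \<omega>) t)
    \<and> (t < K * T \<longrightarrow> integrable Q (\<lambda>\<omega>. x.est_err \<omega> t) \<and> integrable Q (\<lambda>\<omega>. y.est_err \<omega> t))"
  using assms
proof (induction t)
  case 0
  interpret Q: prob_space Q
    by (rule Q)
  show ?case
    using x.est_err_epoch_start(1)[OF K_pos] y.est_err_epoch_start(1)[OF K_pos] Q.finite_measure_axioms
    by (simp add: state_0 square_integrable_const)
next
  case (Suc t)
  have t: "t < K * T"
    using Suc.prems by simp
  have x: "square_integrable Q (\<lambda>\<omega>. x_seq (\<xi> \<omega>) t)" and z: "square_integrable Q (\<lambda>\<omega>. z_seq (\<xi> \<omega>) t)"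
    and err: "integrable Q (\<lambda>\<omega>. x.est_err \<omega> t)" "integrable Q (\<lambda>\<omega>. y.est_err \<omega> t)"
    using Suc.IH t by auto
  have x': "square_integrable Q (\<lambda>\<omega>. x_seq (\<xi> \<omega>) (Suc t))"
    using x_seq_Suc_square_integrable[OF t x z x.G_square_integrable[OF t x err(1)]] .
  have z': "square_integrable Q (\<lambda>\<omega>. z_seq (\<xi> \<omega>) (Suc t))"
    unfolding state_Suc(3)[of _ t] using z x'
    by (intro square_integrable_add square_integrable_scaleR square_integrable_diff)
  have err': "integrable Q (\<lambda>\<omega>. x.est_err \<omega> (Suc t))" "integrable Q (\<lambda>\<omega>. y.est_err \<omega> (Suc t))"
    if "Suc t < K * T"
    using x.est_err_Suc_integrable[OF that x x' err(1)] y.est_err_Suc_integrable[OF that x x' err(2)] by auto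
  show ?case
    using x' z' err' by auto
qed

lemma step_integrable:
  assumes "t < K * T"
  shows "integrable Q (\<lambda>\<omega>. (norm (x_seq (\<xi> \<omega>) (Suc t) - x_seq (\<xi> \<omega>) t))\<^sup>2)"
    and "integrable Q (\<lambda>\<omega>. (norm (y_seq (\<xi> \<omega>) (Suc t) - y_seq (\<xi> \<omega>) t))\<^sup>2)"
    and "integrable Q (\<lambda>\<omega>. (norm (x_seq (\<xi> \<omega>) (Suc t) - z_seq (\<xi> \<omega>) t))\<^sup>2)"
    and "integrable Q (\<lambda>\<omega>. x.est_err \<omega> t)" "integrable Q (\<lambda>\<omega>. y.est_err \<omega> t)"
proof -
  have "square_integrable Q (\<lambda>\<omega>. x_seq (\<xi> \<omega>) t)" "square_integrable Q (\<lambda>\<omega>. z_seq (\<xi> \<omega>) t)"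
    "square_integrable Q (\<lambda>\<omega>. x_seq (\<xi> \<omega>) (Suc t))"
    and err: "integrable Q (\<lambda>\<omega>. x.est_err \<omega> t)" "integrable Q (\<lambda>\<omega>. y.est_err \<omega> t)"
    using iterates_integrable[of t] iterates_integrable[of "Suc t"] assms by auto
  then have "square_integrable Q (\<lambda>\<omega>. x_seq (\<xi> \<omega>) (Suc t) - x_seq (\<xi> \<omega>) t)"
    "square_integrable Q (\<lambda>\<omega>. y_seq (\<xi> \<omega>) (Suc t) - y_seq (\<xi> \<omega>) t)"
    "square_integrable Q (\<lambda>\<omega>. x_seq (\<xi> \<omega>) (Suc t) - z_seq (\<xi> \<omega>) t)"
    using assms by (auto intro!: square_integrable_diff y_seq_square_integrable)
  then show "integrable Q (\<lambda>\<omega>. (norm (x_seq (\<xi> \<omega>) (Suc t) - x_seq (\<xi> \<omega>) t))\<^sup>2)"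
    "integrable Q (\<lambda>\<omega>. (norm (y_seq (\<xi> \<omega>) (Suc t) - y_seq (\<xi> \<omega>) t))\<^sup>2)"
    "integrable Q (\<lambda>\<omega>. (norm (x_seq (\<xi> \<omega>) (Suc t) - z_seq (\<xi> \<omega>) t))\<^sup>2)"
    unfolding square_integrable_def by auto
  show "integrable Q (\<lambda>\<omega>. x.est_err \<omega> t)" "integrable Q (\<lambda>\<omega>. y.est_err \<omega> t)"
    by (fact err)+
qed

definition "stat_x \<omega> t =
  (infdist 0 ((\<lambda>v. Fx (x_seq (\<xi> \<omega>) t) (y_seq (\<xi> \<omega>) t) + v) ` normal_cone X (x_seq (\<xi> \<omega>) t)))\<^sup>2"
definition "stat_y \<omega> t =
  (infdist 0 ((\<lambda>v. - Fy (x_seq (\<xi> \<omega>) t) (y_seq (\<xi> \<omega>) t) + v) ` normal_cone Y (y_seq (\<xi> \<omega>) t)))\<^sup>2"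

definition "sq_step_x t = (\<integral>\<omega>. (norm (x_seq (\<xi> \<omega>) (Suc t) - x_seq (\<xi> \<omega>) t))\<^sup>2 \<partial>Q)"
definition "sq_step_y t = (\<integral>\<omega>. (norm (y_seq (\<xi> \<omega>) (Suc t) - y_seq (\<xi> \<omega>) t))\<^sup>2 \<partial>Q)"
definition "sq_gap_xz t = (\<integral>\<omega>. (norm (x_seq (\<xi> \<omega>) (Suc t) - z_seq (\<xi> \<omega>) t))\<^sup>2 \<partial>Q)"

lemma g_mean_eq: "x \<in> X \<Longrightarrow> y \<in> Y \<Longrightarrow> x.g_mean x y = Fx x y" "x \<in> X \<Longrightarrow> y \<in> Y \<Longrightarrow> y.g_mean x y = Fy x y"
  by (simp_all add: x.g_mean_def y.g_mean_def unbiased_x unbiased_y)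

lemma stat_x_Suc_le:
  "stat_x \<omega> (Suc t) \<le> (4 / ax\<^sup>2 + 8 * Lx\<^sup>2 + 8 * r\<^sup>2) * (norm (x_seq (\<xi> \<omega>) (Suc t) - x_seq (\<xi> \<omega>) t))\<^sup>2
     + 8 * Ly\<^sup>2 * (norm (y_seq (\<xi> \<omega>) (Suc t) - y_seq (\<xi> \<omega>) t))\<^sup>2
     + 8 * r\<^sup>2 * (norm (x_seq (\<xi> \<omega>) (Suc t) - z_seq (\<xi> \<omega>) t))\<^sup>2 + 4 * x.est_err \<omega> t"
proof -
  let ?x = "x_seq (\<xi> \<omega>)" and ?y = "y_seq (\<xi> \<omega>)"
  have "stat_x \<omega> (Suc t) \<le> 4 * (norm (Fx (?x (Suc t)) (?y (Suc t)) - Fx (?x t) (?y t)))\<^sup>2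
      + 4 * (norm (Gx_seq (\<xi> \<omega>) t - Fx (?x t) (?y t)))\<^sup>2
      + (4 / ax\<^sup>2 + 8 * r\<^sup>2) * (norm (?x (Suc t) - ?x t))\<^sup>2 + 8 * r\<^sup>2 * (norm (?x (Suc t) - z_seq (\<xi> \<omega>) t))\<^sup>2"
    unfolding stat_x_def by (rule projected_descent_step_stationarity[OF X(3,2,1) step_pos(1) state_Suc(1)])
  moreover have "(norm (Fx (?x (Suc t)) (?y (Suc t)) - Fx (?x t) (?y t)))\<^sup>2
      \<le> 2 * Lx\<^sup>2 * (norm (?x (Suc t) - ?x t))\<^sup>2 + 2 * Ly\<^sup>2 * (norm (?y (Suc t) - ?y t))\<^sup>2"
    using x.g_mean_diff_sq_le[OF x_seq_in x_seq_in y_seq_in y_seq_in] by (simp add: g_mean_eq x_seq_in y_seq_in)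
  ultimately show ?thesis
    by (simp add: x.est_err_def g_mean_eq x_seq_in y_seq_in algebra_simps)
qed

lemma stat_y_Suc_le:
  "stat_y \<omega> (Suc t) \<le> (3 / ay\<^sup>2 + 3 * Ly\<^sup>2) * (norm (y_seq (\<xi> \<omega>) (Suc t) - y_seq (\<xi> \<omega>) t))\<^sup>2
     + 3 * Ly\<^sup>2 * (norm (x_seq (\<xi> \<omega>) (Suc t) - x_seq (\<xi> \<omega>) t))\<^sup>2 + 3 * y.est_err \<omega> t"
proof -
  let ?x = "x_seq (\<xi> \<omega>)" and ?y = "y_seq (\<xi> \<omega>)"
  have "stat_y \<omega> (Suc t) \<le> 3 * (norm (Fy (?x (Suc t)) (?y (Suc t)) - Fy (?x t) (?y t)))\<^sup>2
      + 3 * (norm (Gy_seq (\<xi> \<omega>) t - Fy (?x t) (?y t)))\<^sup>2 + (3 / ay\<^sup>2) * (norm (?y (Suc t) - ?y t))\<^sup>2"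
    unfolding stat_y_def by (rule projected_ascent_step_stationarity[OF Y(3,2,1) step_pos(2) state_Suc(2)])
  moreover have "(norm (Fy (?x (Suc t)) (?y (Suc t)) - Fy (?x t) (?y t)))\<^sup>2
      \<le> Ly\<^sup>2 * (norm (?x (Suc t) - ?x t))\<^sup>2 + Ly\<^sup>2 * (norm (?y (Suc t) - ?y t))\<^sup>2"
    using y.g_mean_diff_sq_le[OF x_seq_in x_seq_in y_seq_in y_seq_in] by (simp add: g_mean_eq x_seq_in y_seq_in)
  ultimately show ?thesis
    by (simp add: y.est_err_def g_mean_eq x_seq_in y_seq_in algebra_simps)
qed

lemma expected_stat_x_Suc_le:
  assumes "t < K * T"
  shows "(\<integral>\<omega>. stat_x \<omega> (Suc t) \<partial>Q) \<le> (4 / ax\<^sup>2 + 8 * Lx\<^sup>2 + 8 * r\<^sup>2) * sq_step_x t + 8 * Ly\<^sup>2 * sq_step_y t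
    + 8 * r\<^sup>2 * sq_gap_xz t + 4 * (\<integral>\<omega>. x.est_err \<omega> t \<partial>Q)"
proof -
  note int = step_integrable[OF assms]
  have "(\<integral>\<omega>. stat_x \<omega> (Suc t) \<partial>Q) \<le> (\<integral>\<omega>. (4 / ax\<^sup>2 + 8 * Lx\<^sup>2 + 8 * r\<^sup>2) * (norm (x_seq (\<xi> \<omega>) (Suc t) - x_seq (\<xi> \<omega>) t))\<^sup>2
     + 8 * Ly\<^sup>2 * (norm (y_seq (\<xi> \<omega>) (Suc t) - y_seq (\<xi> \<omega>) t))\<^sup>2
     + 8 * r\<^sup>2 * (norm (x_seq (\<xi> \<omega>) (Suc t) - z_seq (\<xi> \<omega>) t))\<^sup>2 + 4 * x.est_err \<omega> t \<partial>Q)"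
    using int stat_x_Suc_le x.est_err_nonneg by (intro integral_mono') auto
  also have "\<dots> = (4 / ax\<^sup>2 + 8 * Lx\<^sup>2 + 8 * r\<^sup>2) * sq_step_x t + 8 * Ly\<^sup>2 * sq_step_y t
    + 8 * r\<^sup>2 * sq_gap_xz t + 4 * (\<integral>\<omega>. x.est_err \<omega> t \<partial>Q)"
    using int by (simp add: sq_step_x_def sq_step_y_def sq_gap_xz_def)
  finally show ?thesis .
qed

lemma expected_stat_y_Suc_le:
  assumes "t < K * T"
  shows "(\<integral>\<omega>. stat_y \<omega> (Suc t) \<partial>Q)
    \<le> (3 / ay\<^sup>2 + 3 * Ly\<^sup>2) * sq_step_y t + 3 * Ly\<^sup>2 * sq_step_x t + 3 * (\<integral>\<omega>. y.est_err \<omega> t \<partial>Q)"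
proof -
  note int = step_integrable[OF assms]
  have "(\<integral>\<omega>. stat_y \<omega> (Suc t) \<partial>Q) \<le> (\<integral>\<omega>. (3 / ay\<^sup>2 + 3 * Ly\<^sup>2) * (norm (y_seq (\<xi> \<omega>) (Suc t) - y_seq (\<xi> \<omega>) t))\<^sup>2
     + 3 * Ly\<^sup>2 * (norm (x_seq (\<xi> \<omega>) (Suc t) - x_seq (\<xi> \<omega>) t))\<^sup>2 + 3 * y.est_err \<omega> t \<partial>Q)"
    using int stat_y_Suc_le y.est_err_nonneg by (intro integral_mono') auto
  also have "\<dots> = (3 / ay\<^sup>2 + 3 * Ly\<^sup>2) * sq_step_y t + 3 * Ly\<^sup>2 * sq_step_x t + 3 * (\<integral>\<omega>. y.est_err \<omega> t \<partial>Q)"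
    using int by (simp add: sq_step_x_def sq_step_y_def)
  finally show ?thesis .
qed

lemma expected_drift:
  assumes "t < K * T"
  shows "integrable Q (\<lambda>\<omega>. x.drift \<omega> t)" "(\<integral>\<omega>. x.drift \<omega> t \<partial>Q) = 2 * Lx\<^sup>2 * sq_step_x t + 2 * Ly\<^sup>2 * sq_step_y t"
    and "integrable Q (\<lambda>\<omega>. y.drift \<omega> t)" "(\<integral>\<omega>. y.drift \<omega> t \<partial>Q) = Ly\<^sup>2 * sq_step_x t + Ly\<^sup>2 * sq_step_y t"
  using step_integrable(1,2)[OF assms]
  by (simp_all add: x.drift_def y.drift_def sq_step_x_def sq_step_y_def)

lemma epoch_stationarity_le:
  assumes k: "k < K"
  shows "(\<Sum>\<tau><T. (\<integral>\<omega>. stat_x \<omega> (k * T + \<tau> + 1) \<partial>Q) + (\<integral>\<omega>. stat_y \<omega> (k * T + \<tau> + 1) \<partial>Q))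
    \<le> (4 / ax\<^sup>2 + 16 * Lx\<^sup>2 + 8 * r\<^sup>2 + 6 * Ly\<^sup>2) * (\<Sum>\<tau><T. sq_step_x (k * T + \<tau>))
     + (3 / ay\<^sup>2 + 22 * Ly\<^sup>2) * (\<Sum>\<tau><T. sq_step_y (k * T + \<tau>))
     + 8 * r\<^sup>2 * (\<Sum>\<tau><T. sq_gap_xz (k * T + \<tau>)) + real T * (4 * Cx + 3 * Cy)"
proof -
  have t: "k * T + \<tau> < K * T" if "\<tau> < T" for \<tau>
  proof -
    have "k * T + T \<le> K * T"
      using k by (metis add.commute less_eq_Suc_le mult_Suc mult_le_mono1)
    then show ?thesis
      using that by simp
  qed
  define SX where "SX = (\<Sum>\<tau><T. sq_step_x (k * T + \<tau>))"
  define SY where "SY = (\<Sum>\<tau><T. sq_step_y (k * T + \<tau>))"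
  define SZ where "SZ = (\<Sum>\<tau><T. sq_gap_xz (k * T + \<tau>))"
  define ErrX where "ErrX = (\<Sum>\<tau><T. \<integral>\<omega>. x.est_err \<omega> (k * T + \<tau>) \<partial>Q)"
  define ErrY where "ErrY = (\<Sum>\<tau><T. \<integral>\<omega>. y.est_err \<omega> (k * T + \<tau>) \<partial>Q)"
  have "(\<Sum>\<tau><T. (\<integral>\<omega>. stat_x \<omega> (k * T + \<tau> + 1) \<partial>Q) + (\<integral>\<omega>. stat_y \<omega> (k * T + \<tau> + 1) \<partial>Q))
     \<le> (\<Sum>\<tau><T. ((4 / ax\<^sup>2 + 8 * Lx\<^sup>2 + 8 * r\<^sup>2) * sq_step_x (k * T + \<tau>) + 8 * Ly\<^sup>2 * sq_step_y (k * T + \<tau>)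
          + 8 * r\<^sup>2 * sq_gap_xz (k * T + \<tau>) + 4 * (\<integral>\<omega>. x.est_err \<omega> (k * T + \<tau>) \<partial>Q))
        + ((3 / ay\<^sup>2 + 3 * Ly\<^sup>2) * sq_step_y (k * T + \<tau>) + 3 * Ly\<^sup>2 * sq_step_x (k * T + \<tau>)
          + 3 * (\<integral>\<omega>. y.est_err \<omega> (k * T + \<tau>) \<partial>Q)))"
    using expected_stat_x_Suc_le[OF t] expected_stat_y_Suc_le[OF t] by (intro sum_mono add_mono) auto
  also have "\<dots> = (4 / ax\<^sup>2 + 8 * Lx\<^sup>2 + 8 * r\<^sup>2) * SX + 8 * Ly\<^sup>2 * SY + 8 * r\<^sup>2 * SZ + 4 * ErrX
      + ((3 / ay\<^sup>2 + 3 * Ly\<^sup>2) * SY + 3 * Ly\<^sup>2 * SX + 3 * ErrY)"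
    by (simp add: SX_def SY_def SZ_def ErrX_def ErrY_def sum.distrib sum_distrib_left)
  finally have stat: "(\<Sum>\<tau><T. (\<integral>\<omega>. stat_x \<omega> (k * T + \<tau> + 1) \<partial>Q) + (\<integral>\<omega>. stat_y \<omega> (k * T + \<tau> + 1) \<partial>Q))
      \<le> (4 / ax\<^sup>2 + 8 * Lx\<^sup>2 + 8 * r\<^sup>2) * SX + 8 * Ly\<^sup>2 * SY + 8 * r\<^sup>2 * SZ + 4 * ErrX
      + ((3 / ay\<^sup>2 + 3 * Ly\<^sup>2) * SY + 3 * Ly\<^sup>2 * SX + 3 * ErrY)" .
  have integrable: "integrable Q (\<lambda>\<omega>. x.est_err \<omega> t) \<and> integrable Q (\<lambda>\<omega>. x.drift \<omega> t)"
    "integrable Q (\<lambda>\<omega>. y.est_err \<omega> t) \<and> integrable Q (\<lambda>\<omega>. y.drift \<omega> t)" if "t < K * T" for t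
    using step_integrable(4,5)[OF that] expected_drift[OF that] by auto
  have "ErrX \<le> real T * Cx + 2 * Lx\<^sup>2 * SX + 2 * Ly\<^sup>2 * SY"
    using x.est_err_epoch_sum[OF k integrable(1)] expected_drift(2)[OF t]
    by (simp add: ErrX_def SX_def SY_def sum.distrib sum_distrib_left)
  moreover have "ErrY \<le> real T * Cy + Ly\<^sup>2 * SX + Ly\<^sup>2 * SY"
    using y.est_err_epoch_sum[OF k integrable(2)] expected_drift(4)[OF t]
    by (simp add: ErrY_def SX_def SY_def sum.distrib sum_distrib_left)
  ultimately have "(4 / ax\<^sup>2 + 8 * Lx\<^sup>2 + 8 * r\<^sup>2) * SX + 8 * Ly\<^sup>2 * SY + 8 * r\<^sup>2 * SZ + 4 * ErrX
      + ((3 / ay\<^sup>2 + 3 * Ly\<^sup>2) * SY + 3 * Ly\<^sup>2 * SX + 3 * ErrY)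
    \<le> (4 / ax\<^sup>2 + 16 * Lx\<^sup>2 + 8 * r\<^sup>2 + 6 * Ly\<^sup>2) * SX + (3 / ay\<^sup>2 + 22 * Ly\<^sup>2) * SY + 8 * r\<^sup>2 * SZ
      + real T * (4 * Cx + 3 * Cy)"
    by (simp add: algebra_simps)
  with stat show ?thesis
    by (simp add: SX_def SY_def SZ_def)
qed

lemma averaged_stationarity_le:
  "(1 / (real K * real T)) * (\<Sum>k<K. \<Sum>\<tau><T. (\<integral>\<omega>. stat_x \<omega> (k * T + \<tau> + 1) \<partial>Q) + (\<integral>\<omega>. stat_y \<omega> (k * T + \<tau> + 1) \<partial>Q))
   \<le> (1 / (real K * real T)) * (4 / ax\<^sup>2 + 16 * Lx\<^sup>2 + 8 * r\<^sup>2 + 6 * Ly\<^sup>2) * (\<Sum>k<K. \<Sum>\<tau><T. sq_step_x (k * T + \<tau>))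
    + (1 / (real K * real T)) * (3 / ay\<^sup>2 + 22 * Ly\<^sup>2) * (\<Sum>k<K. \<Sum>\<tau><T. sq_step_y (k * T + \<tau>))
    + 8 * r\<^sup>2 / (real K * real T) * (\<Sum>k<K. \<Sum>\<tau><T. sq_gap_xz (k * T + \<tau>))
    + (4 * Cx + 3 * Cy)"
proof -
  define cX where "cX = 4 / ax\<^sup>2 + 16 * Lx\<^sup>2 + 8 * r\<^sup>2 + 6 * Ly\<^sup>2"
  define cY where "cY = 3 / ay\<^sup>2 + 22 * Ly\<^sup>2"
  define c where "c = 4 * Cx + 3 * Cy"
  define SX where "SX = (\<Sum>k<K. \<Sum>\<tau><T. sq_step_x (k * T + \<tau>))"
  define SY where "SY = (\<Sum>k<K. \<Sum>\<tau><T. sq_step_y (k * T + \<tau>))"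
  define SZ where "SZ = (\<Sum>k<K. \<Sum>\<tau><T. sq_gap_xz (k * T + \<tau>))"
  have "(\<Sum>k<K. \<Sum>\<tau><T. (\<integral>\<omega>. stat_x \<omega> (k * T + \<tau> + 1) \<partial>Q) + (\<integral>\<omega>. stat_y \<omega> (k * T + \<tau> + 1) \<partial>Q))
     \<le> (\<Sum>k<K. cX * (\<Sum>\<tau><T. sq_step_x (k * T + \<tau>)) + cY * (\<Sum>\<tau><T. sq_step_y (k * T + \<tau>))
          + 8 * r\<^sup>2 * (\<Sum>\<tau><T. sq_gap_xz (k * T + \<tau>)) + real T * c)"
    unfolding cX_def cY_def c_def by (intro sum_mono epoch_stationarity_le) auto
  also have "\<dots> = cX * SX + cY * SY + 8 * r\<^sup>2 * SZ + real K * real T * c"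
    by (simp add: SX_def SY_def SZ_def sum.distrib sum_distrib_left)
  finally have "(1 / (real K * real T)) * (\<Sum>k<K. \<Sum>\<tau><T. (\<integral>\<omega>. stat_x \<omega> (k * T + \<tau> + 1) \<partial>Q)
      + (\<integral>\<omega>. stat_y \<omega> (k * T + \<tau> + 1) \<partial>Q))
    \<le> (1 / (real K * real T)) * (cX * SX + cY * SY + 8 * r\<^sup>2 * SZ + real K * real T * c)"
    using K_pos T_pos by (intro mult_left_mono) auto
  also have "\<dots> = (1 / (real K * real T)) * cX * SX + (1 / (real K * real T)) * cY * SY
      + 8 * r\<^sup>2 / (real K * real T) * SZ + c"
    using K_pos T_pos by (simp add: field_simps)
  finally show ?thesis
    unfolding cX_def cY_def c_def SX_def SY_def SZ_def .
qed

end

context spider_problem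
begin

(* The locale predicate spider_gda has no arguments beta, r and z0: they occur in no assumption. *)

lemma online_sampling:
  fixes init :: "'w \<Rightarrow> nat \<Rightarrow> 'a \<Rightarrow> 'b \<Rightarrow> 'a \<times> 'b" and \<xi> :: "'w \<Rightarrow> nat \<Rightarrow> nat \<Rightarrow> nat \<Rightarrow> 'c"
  assumes "0 < B"
    and "Cx = \<sigma>x\<^sup>2 / real B \<and> Cy = \<sigma>y\<^sup>2 / real B \<and>
          (\<forall>\<omega> k x y. init \<omega> k x y =
              ((1 / real B) *\<^sub>R (\<Sum>i<B. gx x y (\<xi> \<omega> k 0 i)),
               (1 / real B) *\<^sub>R (\<Sum>i<B. gy x y (\<xi> \<omega> k 0 i)))) \<and>
          prob_space.indep_vars Q (\<lambda>_. P) (\<lambda>(k, \<tau>, i) \<omega>. \<xi> \<omega> k \<tau> i)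
             {(k, \<tau>, i). k < K \<and> \<tau> < T \<and> i < (if \<tau> = 0 then B else M)} \<and>
          (\<forall>k \<tau> i. k < K \<and> \<tau> < T \<and> i < (if \<tau> = 0 then B else M) \<longrightarrow>
             distr Q P (\<lambda>\<omega>. \<xi> \<omega> k \<tau> i) = P)"
  shows "\<exists>I smp. spider_gda X Y P Q gx gy Fx Fy Lx Ly \<sigma>x \<sigma>y ax ay K T M x0 y0 Cx Cy B \<xi> I smp
    \<and> (\<forall>\<omega>. init \<omega> = (\<lambda>k x y. ((1 / real B) *\<^sub>R (\<Sum>i<B. gx x y (smp (\<xi> \<omega>) k i)),
                                  (1 / real B) *\<^sub>R (\<Sum>i<B. gy x y (smp (\<xi> \<omega>) k i)))))"
proof (intro exI conjI)
  define I where "I = {(k, \<tau>, i). k < K \<and> \<tau> < T \<and> i < (if \<tau> = 0 then B else M)}"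
  show "spider_gda X Y P Q gx gy Fx Fy Lx Ly \<sigma>x \<sigma>y ax ay K T M x0 y0 Cx Cy B \<xi> I (\<lambda>xi k i. xi k 0 i)"
  proof (intro spider_gda.intro spider_gda_axioms.intro)
    show "(\<lambda>u. u (k, 0, i)) \<in> measurable (Pi\<^sub>M A (\<lambda>_. P)) P"
      if "k < K" "i < B" "{j \<in> I. fst j = k \<and> fst (snd j) = 0} \<subseteq> A" for A k i
      using that T_pos by (intro measurable_component_singleton) (auto simp: I_def)
  qed (use assms spider_problem_axioms T_pos in \<open>auto simp: I_def\<close>)
  show "\<forall>\<omega>. init \<omega> = (\<lambda>k x y. ((1 / real B) *\<^sub>R (\<Sum>i<B. gx x y (\<xi> \<omega> k 0 i)),
                                (1 / real B) *\<^sub>R (\<Sum>i<B. gy x y (\<xi> \<omega> k 0 i))))"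
    using assms(2) by (simp add: fun_eq_iff)
qed

lemma finite_sum_sampling:
  fixes init :: "'w \<Rightarrow> nat \<Rightarrow> 'a \<Rightarrow> 'b \<Rightarrow> 'a \<times> 'b" and \<xi> :: "'w \<Rightarrow> nat \<Rightarrow> nat \<Rightarrow> nat \<Rightarrow> 'c"
  assumes "\<exists>(N::nat) (d::nat \<Rightarrow> 'c). 0 < N \<and> B = N \<and>
          P = measure_pmf (map_pmf d (pmf_of_set {..<N})) \<and>
          Cx = 0 \<and> Cy = 0 \<and>
          (\<forall>\<omega> k x y. init \<omega> k x y =
              ((1 / real N) *\<^sub>R (\<Sum>j<N. gx x y (d j)),
               (1 / real N) *\<^sub>R (\<Sum>j<N. gy x y (d j)))) \<and>
          prob_space.indep_vars Q (\<lambda>_. P) (\<lambda>(k, \<tau>, i) \<omega>. \<xi> \<omega> k \<tau> i)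
             {(k, \<tau>, i). k < K \<and> 1 \<le> \<tau> \<and> \<tau> < T \<and> i < M} \<and>
          (\<forall>k \<tau> i. k < K \<and> 1 \<le> \<tau> \<and> \<tau> < T \<and> i < M \<longrightarrow>
             distr Q P (\<lambda>\<omega>. \<xi> \<omega> k \<tau> i) = P)"
  shows "\<exists>I smp. spider_gda X Y P Q gx gy Fx Fy Lx Ly \<sigma>x \<sigma>y ax ay K T M x0 y0 Cx Cy B \<xi> I smp
    \<and> (\<forall>\<omega>. init \<omega> = (\<lambda>k x y. ((1 / real B) *\<^sub>R (\<Sum>i<B. gx x y (smp (\<xi> \<omega>) k i)),
                                  (1 / real B) *\<^sub>R (\<Sum>i<B. gy x y (smp (\<xi> \<omega>) k i)))))"
proof -
  obtain N d where N: "0 < N" "B = N" and PN: "P = measure_pmf (map_pmf d (pmf_of_set {..<N}))"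
    and rest: "Cx = 0 \<and> Cy = 0 \<and> (\<forall>\<omega> k x y. init \<omega> k x y =
        ((1 / real N) *\<^sub>R (\<Sum>j<N. gx x y (d j)), (1 / real N) *\<^sub>R (\<Sum>j<N. gy x y (d j)))) \<and>
      prob_space.indep_vars Q (\<lambda>_. P) (\<lambda>(k, \<tau>, i) \<omega>. \<xi> \<omega> k \<tau> i) {(k, \<tau>, i). k < K \<and> 1 \<le> \<tau> \<and> \<tau> < T \<and> i < M} \<and>
      (\<forall>k \<tau> i. k < K \<and> 1 \<le> \<tau> \<and> \<tau> < T \<and> i < M \<longrightarrow> distr Q P (\<lambda>\<omega>. \<xi> \<omega> k \<tau> i) = P)"
    using assms by blast
  define I where "I = {(k, \<tau>, i). k < K \<and> 1 \<le> \<tau> \<and> \<tau> < T \<and> i < M}"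
  have "spider_gda X Y P Q gx gy Fx Fy Lx Ly \<sigma>x \<sigma>y ax ay K T M x0 y0 Cx Cy B \<xi> I (\<lambda>xi k i. d i)"
  proof (intro spider_gda.intro spider_gda_axioms.intro disjI2 conjI allI impI)
    fix x y assume xy: "x \<in> X" "y \<in> Y"
    show "(1 / real B) *\<^sub>R (\<Sum>i<B. gx x y (d i)) = Fx x y"
      using integral_map_pmf_of_set_lessThan[OF N(1), where d=d and f="gx x y"] unbiased_x[OF xy]
      by (simp add: N(2) PN)
    show "(1 / real B) *\<^sub>R (\<Sum>i<B. gy x y (d i)) = Fy x y"
      using integral_map_pmf_of_set_lessThan[OF N(1), where d=d and f="gy x y"] unbiased_y[OF xy]
      by (simp add: N(2) PN)
  qed (use rest spider_problem_axioms in \<open>auto simp: I_def PN\<close>)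
  moreover have "init \<omega> = (\<lambda>k x y. ((1 / real B) *\<^sub>R (\<Sum>i<B. gx x y (d i)), (1 / real B) *\<^sub>R (\<Sum>i<B. gy x y (d i))))"
    for \<omega>
    using rest by (simp add: N(2) fun_eq_iff)
  ultimately show ?thesis
    by blast
qed

end

theorem lemmaA17:
  fixes X :: "'a::euclidean_space set" and Y :: "'b::euclidean_space set"
    and P :: "'c measure" and Q :: "'w measure"
    and f :: "'a \<Rightarrow> 'b \<Rightarrow> 'c \<Rightarrow> real"
    and gx :: "'a \<Rightarrow> 'b \<Rightarrow> 'c \<Rightarrow> 'a" and gy :: "'a \<Rightarrow> 'b \<Rightarrow> 'c \<Rightarrow> 'b"
    and F :: "'a \<Rightarrow> 'b \<Rightarrow> real"
    and Fx :: "'a \<Rightarrow> 'b \<Rightarrow> 'a" and Fy :: "'a \<Rightarrow> 'b \<Rightarrow> 'b"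
    and lf Lx Ly \<rho> \<sigma>x \<sigma>y Flow ax ay \<beta> r Cx Cy :: real
    and K T M B :: nat
    and init :: "'w \<Rightarrow> nat \<Rightarrow> 'a \<Rightarrow> 'b \<Rightarrow> 'a \<times> 'b"
    and \<xi> :: "'w \<Rightarrow> nat \<Rightarrow> nat \<Rightarrow> nat \<Rightarrow> 'c"
    and x0 z0 :: 'a and y0 :: 'b
    and xs zs :: "'w \<Rightarrow> nat \<Rightarrow> 'a" and ys :: "'w \<Rightarrow> nat \<Rightarrow> 'b"
  defines "xs \<equiv> \<lambda>\<omega>. alg_x X Y ax ay \<beta> r T M gx gy (init \<omega>) (\<xi> \<omega>) x0 y0 z0"
      and "ys \<equiv> \<lambda>\<omega>. alg_y X Y ax ay \<beta> r T M gx gy (init \<omega>) (\<xi> \<omega>) x0 y0 z0"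
      and "zs \<equiv> \<lambda>\<omega>. alg_z X Y ax ay \<beta> r T M gx gy (init \<omega>) (\<xi> \<omega>) x0 y0 z0"
  assumes X: "X \<noteq> {}" "closed X" "convex X"
      and Y: "Y \<noteq> {}" "closed Y" "convex Y" "compact Y"
      and P: "prob_space P" and Q: "prob_space Q"
      \<comment> \<open>f is differentiable with partial gradients gx, gy\<close>
      and grad_f_x: "\<And>x y s. ((\<lambda>u. f u y s) has_derivative (\<lambda>h. inner (gx x y s) h)) (at x)"
      and grad_f_y: "\<And>x y s. ((\<lambda>v. f x v s) has_derivative (\<lambda>h. inner (gy x y s) h)) (at y)"
      \<comment> \<open>regularity implicit in the expectations of the Smoothness Assumption\<close>
      and f_int: "\<And>x y. integrable P (f x y)"
      and gx_meas: "(\<lambda>(x, y, s). gx x y s) \<in> borel_measurable (borel \<Otimes>\<^sub>M (borel \<Otimes>\<^sub>M P))"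
      and gy_meas: "(\<lambda>(x, y, s). gy x y s) \<in> borel_measurable (borel \<Otimes>\<^sub>M (borel \<Otimes>\<^sub>M P))"
      and gx_sq: "\<And>x y. x \<in> X \<Longrightarrow> y \<in> Y \<Longrightarrow> integrable P (\<lambda>s. (norm (gx x y s))\<^sup>2)"
      and gy_sq: "\<And>x y. x \<in> X \<Longrightarrow> y \<in> Y \<Longrightarrow> integrable P (\<lambda>s. (norm (gy x y s))\<^sup>2)"
      and F_def: "\<And>x y. F x y = (\<integral>s. f x y s \<partial>P)"
      \<comment> \<open>(ii)\<close>
      and lip: "\<And>x1 x2 y1 y2. x1 \<in> X \<Longrightarrow> x2 \<in> X \<Longrightarrow> y1 \<in> Y \<Longrightarrow> y2 \<in> Y \<Longrightarrow>
                 (\<integral>s. \<bar>f x1 y1 s - f x2 y2 s\<bar> \<partial>P) \<le> lf * (norm (x1 - x2) + norm (y1 - y2))"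
      \<comment> \<open>(iii)\<close>
      and Lxx: "\<And>x1 x2 y. x1 \<in> X \<Longrightarrow> x2 \<in> X \<Longrightarrow> y \<in> Y \<Longrightarrow>
                 (\<integral>s. (norm (gx x1 y s - gx x2 y s))\<^sup>2 \<partial>P) \<le> Lx\<^sup>2 * (norm (x1 - x2))\<^sup>2"
      and Lxy: "\<And>x y1 y2. x \<in> X \<Longrightarrow> y1 \<in> Y \<Longrightarrow> y2 \<in> Y \<Longrightarrow>
                 (\<integral>s. (norm (gx x y1 s - gx x y2 s))\<^sup>2 \<partial>P) \<le> Ly\<^sup>2 * (norm (y1 - y2))\<^sup>2"
      and Ly: "\<And>x1 x2 y1 y2. x1 \<in> X \<Longrightarrow> x2 \<in> X \<Longrightarrow> y1 \<in> Y \<Longrightarrow> y2 \<in> Y \<Longrightarrow>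
                 (\<integral>s. (norm (gy x1 y1 s - gy x2 y2 s))\<^sup>2 \<partial>P)
                   \<le> Ly\<^sup>2 * ((norm (x1 - x2))\<^sup>2 + (norm (y1 - y2))\<^sup>2)"
      \<comment> \<open>(iv)\<close>
      and weak_cvx: "\<And>y. y \<in> Y \<Longrightarrow> convex_on X (\<lambda>x. F x y + \<rho> / 2 * (norm x)\<^sup>2)"
      \<comment> \<open>(v): Fx, Fy form the gradient of F, equal to the expected stochastic gradient\<close>
      and grad_F: "\<And>x y. x \<in> X \<Longrightarrow> y \<in> Y \<Longrightarrow>
                 ((\<lambda>p. F (fst p) (snd p)) has_derivative
                    (\<lambda>h. inner (Fx x y) (fst h) + inner (Fy x y) (snd h))) (at (x, y))"
      and unbiased_x: "\<And>x y. x \<in> X \<Longrightarrow> y \<in> Y \<Longrightarrow> (\<integral>s. gx x y s \<partial>P) = Fx x y"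
      and unbiased_y: "\<And>x y. x \<in> X \<Longrightarrow> y \<in> Y \<Longrightarrow> (\<integral>s. gy x y s \<partial>P) = Fy x y"
      and var_x: "\<And>x y. x \<in> X \<Longrightarrow> y \<in> Y \<Longrightarrow> (\<integral>s. (norm (gx x y s - Fx x y))\<^sup>2 \<partial>P) \<le> \<sigma>x\<^sup>2"
      and var_y: "\<And>x y. x \<in> X \<Longrightarrow> y \<in> Y \<Longrightarrow> (\<integral>s. (norm (gy x y s - Fy x y))\<^sup>2 \<partial>P) \<le> \<sigma>y\<^sup>2"
      \<comment> \<open>(vi)\<close>
      and lower: "\<exists>y\<in>Y. \<forall>x\<in>X. Flow \<le> F x y"
      \<comment> \<open>Algorithm parameters\<close>
      and params: "0 < ax" "0 < ay" "0 < \<beta>" "0 < r" "0 < K" "0 < T" "0 < M" "0 < B" "T = M"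
      and start: "x0 \<in> X" "y0 \<in> Y"
      \<comment> \<open>the two settings\<close>
      and setting:
        "(\<comment> \<open>online setting\<close>
          Cx = \<sigma>x\<^sup>2 / real B \<and> Cy = \<sigma>y\<^sup>2 / real B \<and>
          (\<forall>\<omega> k x y. init \<omega> k x y =
              ((1 / real B) *\<^sub>R (\<Sum>i<B. gx x y (\<xi> \<omega> k 0 i)),
               (1 / real B) *\<^sub>R (\<Sum>i<B. gy x y (\<xi> \<omega> k 0 i)))) \<and>
          prob_space.indep_vars Q (\<lambda>_. P) (\<lambda>(k, \<tau>, i) \<omega>. \<xi> \<omega> k \<tau> i)
             {(k, \<tau>, i). k < K \<and> \<tau> < T \<and> i < (if \<tau> = 0 then B else M)} \<and>
          (\<forall>k \<tau> i. k < K \<and> \<tau> < T \<and> i < (if \<tau> = 0 then B else M) \<longrightarrow>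
             distr Q P (\<lambda>\<omega>. \<xi> \<omega> k \<tau> i) = P))
       \<or> (\<comment> \<open>finite-sum setting: empirical distribution of N samples, full batch B = N\<close>
          \<exists>(N::nat) (d::nat \<Rightarrow> 'c). 0 < N \<and> B = N \<and>
          P = measure_pmf (map_pmf d (pmf_of_set {..<N})) \<and>
          Cx = 0 \<and> Cy = 0 \<and>
          (\<forall>\<omega> k x y. init \<omega> k x y =
              ((1 / real N) *\<^sub>R (\<Sum>j<N. gx x y (d j)),
               (1 / real N) *\<^sub>R (\<Sum>j<N. gy x y (d j)))) \<and>
          prob_space.indep_vars Q (\<lambda>_. P) (\<lambda>(k, \<tau>, i) \<omega>. \<xi> \<omega> k \<tau> i)
             {(k, \<tau>, i). k < K \<and> 1 \<le> \<tau> \<and> \<tau> < T \<and> i < M} \<and>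
          (\<forall>k \<tau> i. k < K \<and> 1 \<le> \<tau> \<and> \<tau> < T \<and> i < M \<longrightarrow>
             distr Q P (\<lambda>\<omega>. \<xi> \<omega> k \<tau> i) = P))"
  shows
    "(1 / (real K * real T)) *
       (\<Sum>k<K. \<Sum>\<tau><T.
          (\<integral>\<omega>. (infdist 0 ((\<lambda>v. Fx (xs \<omega> (k*T+\<tau>+1)) (ys \<omega> (k*T+\<tau>+1)) + v)
                               ` normal_cone X (xs \<omega> (k*T+\<tau>+1))))\<^sup>2 \<partial>Q)
        + (\<integral>\<omega>. (infdist 0 ((\<lambda>v. - Fy (xs \<omega> (k*T+\<tau>+1)) (ys \<omega> (k*T+\<tau>+1)) + v)
                               ` normal_cone Y (ys \<omega> (k*T+\<tau>+1))))\<^sup>2 \<partial>Q))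
     \<le> (1 / (real K * real T)) * (4 / ax\<^sup>2 + 16 * Lx\<^sup>2 + 8 * r\<^sup>2 + 6 * Ly\<^sup>2) *
          (\<Sum>k<K. \<Sum>\<tau><T. \<integral>\<omega>. (norm (xs \<omega> (k*T+\<tau>+1) - xs \<omega> (k*T+\<tau>)))\<^sup>2 \<partial>Q)
       + (1 / (real K * real T)) * (3 / ay\<^sup>2 + 22 * Ly\<^sup>2) *
          (\<Sum>k<K. \<Sum>\<tau><T. \<integral>\<omega>. (norm (ys \<omega> (k*T+\<tau>+1) - ys \<omega> (k*T+\<tau>)))\<^sup>2 \<partial>Q)
       + 8 * r\<^sup>2 / (real K * real T) *
          (\<Sum>k<K. \<Sum>\<tau><T. \<integral>\<omega>. (norm (xs \<omega> (k*T+\<tau>+1) - zs \<omega> (k*T+\<tau>)))\<^sup>2 \<partial>Q)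
       + (4 * Cx + 3 * Cy)"
proof -
  interpret spider_problem X Y P Q gx gy Fx Fy Lx Ly \<sigma>x \<sigma>y ax ay \<beta> r K T M x0 z0 y0
  proof (rule spider_problem.intro)
    show "bounded Y"
      using Y(4) by (rule compact_imp_bounded)
  qed (fact X Y P Q gx_meas gy_meas gx_sq gy_sq Lxx Lxy Ly unbiased_x unbiased_y var_x var_y start
    | use params in simp)+
  note sampling = disjE[OF setting online_sampling[OF params(8)] finite_sum_sampling]
  obtain I smp where "spider_gda X Y P Q gx gy Fx Fy Lx Ly \<sigma>x \<sigma>y ax ay K T M x0 y0 Cx Cy B \<xi> I smp"
    and init: "\<And>\<omega>. init \<omega> = (\<lambda>k x y. ((1 / real B) *\<^sub>R (\<Sum>i<B. gx x y (smp (\<xi> \<omega>) k i)),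
                                          (1 / real B) *\<^sub>R (\<Sum>i<B. gy x y (smp (\<xi> \<omega>) k i))))"
    using sampling by blast
  then interpret spider_gda X Y P Q gx gy Fx Fy Lx Ly \<sigma>x \<sigma>y ax ay \<beta> r K T M x0 z0 y0 Cx Cy B \<xi> I smp
    by simp
  have "init \<omega> = init_est (\<xi> \<omega>)" for \<omega>
    by (simp add: init init_est_def fun_eq_iff)
  then have "xs \<omega> t = x_seq (\<xi> \<omega>) t" "ys \<omega> t = y_seq (\<xi> \<omega>) t" "zs \<omega> t = z_seq (\<xi> \<omega>) t" for \<omega> t
    by (simp_all add: xs_def ys_def zs_def alg_x_def alg_y_def alg_z_def x_seq_def y_seq_def z_seq_def state_def)
  then show ?thesis
    using averaged_stationarity_le
    unfolding stat_x_def stat_y_def sq_step_x_def sq_step_y_def sq_gap_xz_def by simp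
qed

end
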